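(* Under the setting and assumptions described in the context, there exists a constant $C>0$ depending only on $L$ and $\nu$ such that, for all sufficiently small $\delta t$ and every $j=0,\dots,M-1$, $$\int_{\mathbb{R}}|\widehat{\mathcal V}_{t_j}-\widehat{\mathcal U}_{t_j}|^2+\frac{\nu\,\delta t}{2}\int_{\mathbb{R}}|\widehat{\mathcal W}_{t_j}-\widehat{\mathcal Z}_{t_j}|^2\le C\big[\varepsilon^v_j+\delta t\,\varepsilon^{\mathcal W}_j\big].$$
   Context: Setting: $d=1$, $\nu>0$, $T>0$, $W$ a one-dimensional Brownian motion. Consider $i\partial_t u=\frac\nu2\partial_{xx}u+f(t,x,u)$, $u(T)=G$, with $u=u^R+iu^I$, $f=f^R+if^I$, $G=G^R+iG^I$ (we write $f(t,x,u)=f(t,x,u^R,u^I)$). Assumptions: (i) $u$ is a bounded solution with $\partial_tu,\partial_xu,\partial_{xx}u,\partial_{xxx}u,\partial_{xxxx}u,\partial_t\partial_xu,\partial_t\partial_{xx}u$ continuous; (ii) these derivatives belong to $L^\infty([0,T];L^2(\mathbb{R};\mathbb{C}))$ with norms less than $K$; (iii) there is $L>0$ with $|f(t,x,y)-f(t,x,y')|\le L|y-y'|$ and $|f(t,x,\phi(x))-f(t',x',\phi(x))|\le L(\sqrt{\rho(|t-t'|)}+|x-x'|)|\phi(x)|$ for all $t,t'\in[0,T]$, $x,x'\in\mathbb{R}$, $y,y'\in\mathbb{C}$, $\phi\in C(\mathbb{R};\mathbb{C})$, where $\rho:[0,\infty)\to[0,\infty)$ is continuous, increasing, $\rho(0)=0$.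 Time grid: $t_j=j\,\delta t$, $j=0,\dots,M$, $\delta t=T/M$; $\delta W_{t_j}=W_{t_{j+1}}-W_{t_j}$; for a starting point $x\in\mathbb{R}$, $X_{t_j}=x+\sqrt\nu W_{t_j}$; $\mathbb E_j$ is conditional expectation given $W_{t_1},\dots,W_{t_j}$. Algorithm: for $j$, parametrized functions (neural networks) $\mathcal U_{t_j}(\cdot;\xi)=\mathcal U^R_{t_j}+i\mathcal U^I_{t_j}$ and $\mathcal Z_{t_j}(\cdot;\eta)=\mathcal Z^R_{t_j}+i\mathcal Z^I_{t_j}$ with parameters $\theta=(\xi,\eta)\in\mathbb{R}^{N_m}$. Set $\widehat{\mathcal U}_{t_M}=G$, $\widehat{\mathcal Z}_{t_M}=G'$. For $j=M-1,\dots,0$, define $F^R=u^R+\frac{\sqrt\nu}2(z^R_{+}+z^I_{+})\Delta_w+\frac{\sqrt\nu}2(z^R-z^I)\Delta_w+f^I(t,x,u^R,u^I)\Delta_t$, $F^I=u^I-\frac{\sqrt\nu}2(z^R_{+}-z^I_{+})\Delta_w+\frac{\sqrt\nu}2(z^R+z^I)\Delta_w-f^R(t,x,u^R,u^I)\Delta_t$, evaluated at $t=t_j$, $x=X_{t_j}$, $u=\mathcal U_{t_j}(X_{t_j};\xi)$, $z=\mathcal Z_{t_j}(X_{t_j};\eta)$, $z_+=\widehat{\mathcal Z}_{t_{j+1}}(X_{t_{j+1}})$, $\Delta_t=\delta t$, $\Delta_w=\delta W_{t_j}$; minimize $L_j(\theta)=\mathbb E|\widehat{\mathcal U}^R_{t_{j+1}}(X_{t_{j+1}})-F^R|^2+\mathbb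 E|\widehat{\mathcal U}^I_{t_{j+1}}(X_{t_{j+1}})-F^I|^2$ over $\theta$, take a minimizer $\theta_j^*=(\xi_j^*,\eta_j^* )$ and set $\widehat{\mathcal U}_{t_j}=\mathcal U_{t_j}(\cdot;\xi^*_j)$, $\widehat{\mathcal Z}_{t_j}=\mathcal Z_{t_j}(\cdot;\eta_j^* )$. We write $\widehat{\mathcal U}_{t_j}$ also for $\widehat{\mathcal U}_{t_j}(X_{t_j})$, etc. Auxiliary system: given $\widehat{\mathcal U}_{t_{j+1}},\widehat{\mathcal Z}_{t_{j+1}}$ (evaluated at $X_{t_{j+1}}$), $\widehat{\mathcal V}_{t_j}=\widehat{\mathcal V}^R_{t_j}+i\widehat{\mathcal V}^I_{t_j}$ and $\widehat{\mathcal W}_{t_j}=\widehat{\mathcal W}^R_{t_j}+i\widehat{\mathcal W}^I_{t_j}$ are defined (uniquely for $\delta t$ small) by $\widehat{\mathcal V}^R_{t_j}=\mathbb E_j\widehat{\mathcal U}^R_{t_{j+1}}-\frac{\sqrt\nu}2\mathbb E_j[(\widehat{\mathcal Z}^R_{t_{j+1}}+\widehat{\mathcal Z}^I_{t_{j+1}})\delta W_{t_j}]-f^I(t_j,X_{t_j},\widehat{\mathcal V}^R_{t_j},\widehat{\mathcal V}^I_{t_j})\delta t$, $\widehat{\mathcal V}^I_{t_j}=\mathbb E_j\widehat{\mathcal U}^I_{t_{j+1}}+\frac{\sqrt\nu}2\mathbb E_j[(\widehat{\mathcal Z}^R_{t_{j+1}}-\widehat{\mathcal Z}^I_{t_{j+1}})\delta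 W_{t_j}]+f^R(t_j,X_{t_j},\widehat{\mathcal V}^R_{t_j},\widehat{\mathcal V}^I_{t_j})\delta t$, $\widehat{\mathcal W}^R_{t_j}=\frac{1}{\delta t\sqrt\nu}\mathbb E_j[(\widehat{\mathcal U}^R_{t_{j+1}}+\widehat{\mathcal U}^I_{t_{j+1}})\delta W_{t_j}]-\frac1{\delta t}\mathbb E_j[\widehat{\mathcal Z}^I_{t_{j+1}}(\delta W_{t_j})^2]$, $\widehat{\mathcal W}^I_{t_j}=\frac{1}{\delta t\sqrt\nu}\mathbb E_j[(\widehat{\mathcal U}^I_{t_{j+1}}-\widehat{\mathcal U}^R_{t_{j+1}})\delta W_{t_j}]+\frac1{\delta t}\mathbb E_j[\widehat{\mathcal Z}^R_{t_{j+1}}(\delta W_{t_j})^2]$; there are deterministic functions $\hat v_j,\hat w_j$ with $\widehat{\mathcal V}_{t_j}=\hat v_j(X_{t_j})$, $\widehat{\mathcal W}_{t_j}=\hat w_j(X_{t_j})$. Approximation errors: $\varepsilon^v_j=\int_{\mathbb R}\inf_\xi\mathbb E|\hat v_j(X_{t_j})-\mathcal U_{t_j}(X_{t_j};\xi)|^2$, $\varepsilon^{\mathcal W}_j=\int_{\mathbb R}\inf_\eta\mathbb E|\hat w_j(X_{t_j})-\mathcal Z_{t_j}(X_{t_j};\eta)|^2$. Convention: all quantities depend on the starting point $x$ through $X$, and for such a quantity $\Phi$, $\int_{\mathbb R}\Phi$ means $\int_{\mathbb R}\mathbb E[\Phi]\,dx$ (integration in the starting point $x$ w.r.t. Lebesgue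 measure, after expectation). *)

theory Defs
  imports "HOL-Probability.Probability"
begin

text \<open>Law of one Brownian increment over a time step dt: N(0, dt).\<close>
definition gauss :: "real \<Rightarrow> real measure" where
  "gauss dt = density lborel (normal_density 0 (sqrt dt))"

text \<open>Probability space of the first n Brownian increments
  (omega i = delta W at t_i, i < n), i.i.d. N(0, dt).\<close>
definition incr_space :: "real \<Rightarrow> nat \<Rightarrow> (nat \<Rightarrow> real) measure" where
  "incr_space dt n = PiM {..<n} (\<lambda>_. gauss dt)"

text \<open>X at t_j started from x: x + sqrt nu * W(t_j), W(t_j) = sum of the first j increments.\<close>
definition Xp :: "real \<Rightarrow> real \<Rightarrow> nat \<Rightarrow> (nat \<Rightarrow> real) \<Rightarrow> real" where
  "Xp nu x j \<omega> = x + sqrt nu * (\<Sum>i<j. \<omega> i)"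

definition EXp :: "real \<Rightarrow> real \<Rightarrow> real \<Rightarrow> nat \<Rightarrow> (real \<Rightarrow> real) \<Rightarrow> ennreal" where
  "EXp nu dt x j g = (\<integral>\<^sup>+ \<omega>. ennreal (g (Xp nu x j \<omega>)) \<partial>incr_space dt j)"

text \<open>Conditional expectation E_j [ h(X at t_(j+1), delta W_j) ] evaluated at X at t_j = y:
  since delta W_j is independent of the past, it equals the Gaussian integral below.\<close>
definition condE :: "real \<Rightarrow> real \<Rightarrow> (real \<Rightarrow> real \<Rightarrow> real) \<Rightarrow> real \<Rightarrow> real" where
  "condE nu dt h y = (\<integral>w. h (y + sqrt nu * w) w \<partial>gauss dt)"

text \<open>Parameter vectors in R^n, encoded as sequences vanishing from index n on.\<close>
definition params :: "nat \<Rightarrow> (nat \<Rightarrow> real) set" where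
  "params n = {\<theta>. \<forall>i\<ge>n. \<theta> i = 0}"

text \<open>Hat-U / Hat-Z of the algorithm: terminal datum at j = M, trained network otherwise
  (the trained parameter p j x may depend on the starting point x).\<close>
definition hatN :: "nat \<Rightarrow> (real \<Rightarrow> complex) \<Rightarrow> (nat \<Rightarrow> real \<Rightarrow> 'a \<Rightarrow> complex)
    \<Rightarrow> (nat \<Rightarrow> real \<Rightarrow> 'a) \<Rightarrow> nat \<Rightarrow> real \<Rightarrow> real \<Rightarrow> complex" where
  "hatN M G N p j x y = (if j = M then G y else N j y (p j x))"

text \<open>The loss L_j at starting point x. Unx, Znx: Hat-U, Hat-Z at t_(j+1);
  Uc, Zc: candidate networks U_(t_j)(.;xi), Z_(t_j)(.;eta).\<close>
definition loss :: "real \<Rightarrow> real \<Rightarrow> (real \<Rightarrow> real \<Rightarrow> complex \<Rightarrow> complex) \<Rightarrow> real \<Rightarrow> nat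
    \<Rightarrow> (real \<Rightarrow> complex) \<Rightarrow> (real \<Rightarrow> complex) \<Rightarrow> (real \<Rightarrow> complex) \<Rightarrow> (real \<Rightarrow> complex) \<Rightarrow> ennreal" where
  "loss nu dt f x j Unx Znx Uc Zc =
    (let X = Xp nu x j; X1 = Xp nu x (Suc j); tj = real j * dt;
         FR = (\<lambda>\<omega>. Re (Uc (X \<omega>))
                 + sqrt nu / 2 * (Re (Znx (X1 \<omega>)) + Im (Znx (X1 \<omega>))) * \<omega> j
                 + sqrt nu / 2 * (Re (Zc (X \<omega>)) - Im (Zc (X \<omega>))) * \<omega> j
                 + Im (f tj (X \<omega>) (Uc (X \<omega>))) * dt);
         FI = (\<lambda>\<omega>. Im (Uc (X \<omega>))
                 - sqrt nu / 2 * (Re (Znx (X1 \<omega>)) - Im (Znx (X1 \<omega>))) * \<omega> j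
                 + sqrt nu / 2 * (Re (Zc (X \<omega>)) + Im (Zc (X \<omega>))) * \<omega> j
                 - Re (f tj (X \<omega>) (Uc (X \<omega>))) * dt)
     in (\<integral>\<^sup>+ \<omega>. ennreal ((Re (Unx (X1 \<omega>)) - FR \<omega>)\<^sup>2) \<partial>incr_space dt (Suc j))
      + (\<integral>\<^sup>+ \<omega>. ennreal ((Im (Unx (X1 \<omega>)) - FI \<omega>)\<^sup>2) \<partial>incr_space dt (Suc j)))"

end

theory Submission
  imports Defs
begin

text \<open>Conditionally on \<open>X\<^sub>t\<^sub>j = y\<close>, the loss \<open>L\<^sub>j\<close> is a least-squares regression on \<open>1\<close> and
  \<open>\<delta>W\<^sub>t\<^sub>j\<close> of data built from the approximations at time \<open>t\<^sub>j\<^sub>+\<^sub>1\<close>. It therefore splits into a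
  residual variance, which does not involve the networks, plus the squared distance of the
  intercept from the conditional mean, plus \<open>\<delta>t\<close> times the squared distance of the slope from
  the conditional covariance. By the auxiliary system these distances are
  \<open>|(v - U) - i \<delta>t (f v - f U)|\<^sup>2\<close> and \<open>\<nu>/2 |w - Z|\<^sup>2\<close>, and for \<open>L \<delta>t \<le> 1/4\<close> the first lies
  between \<open>(3/4)\<^sup>2 |v - U|\<^sup>2\<close> and \<open>(5/4)\<^sup>2 |v - U|\<^sup>2\<close>. Minimality of the trained parameters thus
  bounds the error of the trained \<open>U\<close> by \<open>25/9\<close> times, and that of the trained \<open>Z\<close> by once, the
  error of any other choice of parameters; integrating in the starting point gives the estimate
  with \<open>C = max 3 (\<nu>/2)\<close> for \<open>\<delta>t \<le> 1/(4L)\<close>. Cancelling the residual needs a finite loss,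
  which follows from Gaussian moment bounds: a Cameron--Martin shift for the networks and the
  \<open>L\<^sup>2\<close> bound on \<open>G'\<close> at the last step.\<close>

section \<open>Square-integrable random variables and nonnegative integrals\<close>

lemma integrable_mult_of_square_integrable:
  fixes f g :: "'a \<Rightarrow> real"
  assumes [measurable]: "f \<in> borel_measurable M" "g \<in> borel_measurable M"
    and "integrable M (\<lambda>x. (f x)^2)" "integrable M (\<lambda>x. (g x)^2)"
  shows "integrable M (\<lambda>x. f x * g x)"
proof (rule Bochner_Integration.integrable_bound)
  show "integrable M (\<lambda>x. (f x)^2 + (g x)^2)" using assms by auto
  show "AE x in M. norm (f x * g x) \<le> norm ((f x)^2 + (g x)^2)"
  proof (rule AE_I2)
    fix x
    have "2 * \<bar>f x * g x\<bar> \<le> (f x)^2 + (g x)^2"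
      using sum_squares_bound[of "\<bar>f x\<bar>" "\<bar>g x\<bar>"] by (simp add: abs_mult)
    then show "norm (f x * g x) \<le> norm ((f x)^2 + (g x)^2)" by simp
  qed
qed measurable

lemma square_integrable_add:
  fixes f g :: "'a \<Rightarrow> real"
  assumes [measurable]: "f \<in> borel_measurable M" "g \<in> borel_measurable M"
    and "integrable M (\<lambda>x. (f x)^2)" "integrable M (\<lambda>x. (g x)^2)"
  shows "integrable M (\<lambda>x. (f x + g x)^2)"
  using assms integrable_mult_of_square_integrable[OF assms]
  unfolding power2_sum by (auto simp: mult.assoc)

lemma square_integrable_diff:
  fixes f g :: "'a \<Rightarrow> real"
  assumes [measurable]: "f \<in> borel_measurable M" "g \<in> borel_measurable M"
    and "integrable M (\<lambda>x. (f x)^2)" "integrable M (\<lambda>x. (g x)^2)"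
  shows "integrable M (\<lambda>x. (f x - g x)^2)"
  using square_integrable_add[of f M "\<lambda>x. - g x"] assms by simp

lemma square_integrable_Re_Im:
  fixes g :: "'a \<Rightarrow> complex"
  assumes [measurable]: "g \<in> borel_measurable M"
    and fin: "(\<integral>\<^sup>+w. ennreal ((cmod (g w))^2) \<partial>M) < \<infinity>"
  shows "integrable M (\<lambda>w. (Re (g w))^2)" "integrable M (\<lambda>w. (Im (g w))^2)"
proof -
  have int: "integrable M (\<lambda>w. (cmod (g w))^2)"
    by (rule integrableI_bounded) (use fin in auto)
  show "integrable M (\<lambda>w. (Re (g w))^2)"
    by (rule Bochner_Integration.integrable_bound[OF int]) (auto simp: cmod_power2)
  show "integrable M (\<lambda>w. (Im (g w))^2)"
    by (rule Bochner_Integration.integrable_bound[OF int]) (auto simp: cmod_power2)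
qed

lemma (in prob_space) expectation_regression:
  fixes A W :: "'a \<Rightarrow> real"
  assumes [measurable]: "A \<in> borel_measurable M" "W \<in> borel_measurable M"
    and A2: "integrable M (\<lambda>\<omega>. (A \<omega>)^2)" and W2: "integrable M (\<lambda>\<omega>. (W \<omega>)^2)"
    and EW: "expectation W = 0" and EW2: "expectation (\<lambda>\<omega>. (W \<omega>)^2) = d" and d: "d > 0"
  shows "expectation (\<lambda>\<omega>. (A \<omega> - a - b * W \<omega>)^2) =
     (expectation (\<lambda>\<omega>. (A \<omega>)^2) - (expectation A)^2 - (expectation (\<lambda>\<omega>. A \<omega> * W \<omega>))^2 / d)
     + (expectation A - a)^2 + d * (expectation (\<lambda>\<omega>. A \<omega> * W \<omega>) / d - b)^2"
proof -
  have iA: "integrable M A" and iW: "integrable M W"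
    using A2 W2 by (auto intro: square_integrable_imp_integrable)
  have iAW: "integrable M (\<lambda>\<omega>. A \<omega> * W \<omega>)"
    by (rule integrable_mult_of_square_integrable) (use A2 W2 in auto)
  have "(\<lambda>\<omega>. (A \<omega> - a - b * W \<omega>)^2)
      = (\<lambda>\<omega>. (A \<omega>)^2 + a^2 + b^2 * (W \<omega>)^2 - 2*a * A \<omega> - 2*b * (A \<omega> * W \<omega>) + 2*a*b * W \<omega>)"
    by (simp add: power2_eq_square algebra_simps)
  then have "expectation (\<lambda>\<omega>. (A \<omega> - a - b * W \<omega>)^2)
      = expectation (\<lambda>\<omega>. (A \<omega>)^2 + a^2 + b^2 * (W \<omega>)^2 - 2*a * A \<omega> - 2*b * (A \<omega> * W \<omega>) + 2*a*b * W \<omega>)"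
    by (rule arg_cong)
  also have "\<dots> = expectation (\<lambda>\<omega>. (A \<omega>)^2) + a^2 + b^2 * d
      - 2*a * expectation A - 2*b * expectation (\<lambda>\<omega>. A \<omega> * W \<omega>)"
    using iA iW iAW A2 W2 EW EW2 prob_space
    by (simp add: Bochner_Integration.integral_add Bochner_Integration.integral_diff)
  also have "\<dots> = (expectation (\<lambda>\<omega>. (A \<omega>)^2) - (expectation A)^2 - (expectation (\<lambda>\<omega>. A \<omega> * W \<omega>))^2 / d)
     + (expectation A - a)^2 + d * (expectation (\<lambda>\<omega>. A \<omega> * W \<omega>) / d - b)^2"
    using d by (simp add: power2_eq_square field_simps)
  finally show ?thesis .
qed

lemma (in prob_space) nn_integral_regression:
  fixes A W :: "'a \<Rightarrow> real"
  assumes [measurable]: "A \<in> borel_measurable M" "W \<in> borel_measurable M"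
    and A2: "integrable M (\<lambda>\<omega>. (A \<omega>)^2)" and W2: "integrable M (\<lambda>\<omega>. (W \<omega>)^2)"
    and EW: "expectation W = 0" and EW2: "expectation (\<lambda>\<omega>. (W \<omega>)^2) = d" and d: "d > 0"
  defines "R \<equiv> expectation (\<lambda>\<omega>. (A \<omega>)^2) - (expectation A)^2 - (expectation (\<lambda>\<omega>. A \<omega> * W \<omega>))^2 / d"
  shows "(\<integral>\<^sup>+\<omega>. ennreal ((A \<omega> - a - b * W \<omega>)^2) \<partial>M) =
      ennreal (R + (expectation A - a)^2 + d * (expectation (\<lambda>\<omega>. A \<omega> * W \<omega>) / d - b)^2)"
    and "0 \<le> R"
proof -
  have sq: "integrable M (\<lambda>\<omega>. (A \<omega> - a - b * W \<omega>)^2)" for a b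
  proof -
    have bW: "integrable M (\<lambda>\<omega>. (- b * W \<omega>)^2)"
      using W2 by (simp add: power_mult_distrib)
    have "integrable M (\<lambda>\<omega>. (- a + - b * W \<omega>)^2)"
      by (rule square_integrable_add[OF _ _ _ bW]) auto
    then have "integrable M (\<lambda>\<omega>. (A \<omega> + (- a + - b * W \<omega>))^2)"
      by (rule square_integrable_add[OF _ _ A2, rotated 2]) auto
    then show ?thesis by (simp add: algebra_simps)
  qed
  have "(\<integral>\<^sup>+\<omega>. ennreal ((A \<omega> - a - b * W \<omega>)^2) \<partial>M) = ennreal (expectation (\<lambda>\<omega>. (A \<omega> - a - b * W \<omega>)^2))"
    by (rule nn_integral_eq_integral[OF sq]) simp
  also have "\<dots> = ennreal (R + (expectation A - a)^2 + d * (expectation (\<lambda>\<omega>. A \<omega> * W \<omega>) / d - b)^2)"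
    by (subst expectation_regression[OF assms(1-7)]) (simp add: R_def)
  finally show "(\<integral>\<^sup>+\<omega>. ennreal ((A \<omega> - a - b * W \<omega>)^2) \<partial>M) =
      ennreal (R + (expectation A - a)^2 + d * (expectation (\<lambda>\<omega>. A \<omega> * W \<omega>) / d - b)^2)" .
  have "0 \<le> expectation (\<lambda>\<omega>. (A \<omega> - expectation A - expectation (\<lambda>\<omega>. A \<omega> * W \<omega>) / d * W \<omega>)^2)"
    by simp
  also have "\<dots> = R"
    by (subst expectation_regression[OF assms(1-7)]) (use d in \<open>simp add: R_def\<close>)
  finally show "0 \<le> R" .
qed

text \<open>No measurability is assumed in the next three lemmas: they are applied to the error
  integrands, which involve the arbitrary functions \<open>v\<close>, \<open>w\<close> and the parameters chosen at each
  starting point.\<close>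
lemma nn_integral_cmult_le:
  "ennreal c * (\<integral>\<^sup>+x. f x \<partial>M) \<le> (\<integral>\<^sup>+x. ennreal c * f x \<partial>M)"
  unfolding nn_integral_def SUP_mult_left_ennreal
proof (rule SUP_least)
  fix g assume g: "g \<in> {g. simple_function M g \<and> g \<le> f}"
  have "ennreal c * integral\<^sup>S M g = integral\<^sup>S M (\<lambda>x. ennreal c * g x)"
    using g by simp
  also have "\<dots> \<le> (SUP g\<in>{g. simple_function M g \<and> g \<le> (\<lambda>x. ennreal c * f x)}. integral\<^sup>S M g)"
    using g by (intro SUP_upper) (auto simp: le_fun_def intro!: mult_left_mono)
  finally show "ennreal c * integral\<^sup>S M g
      \<le> (SUP g\<in>{g. simple_function M g \<and> g \<le> (\<lambda>x. ennreal c * f x)}. integral\<^sup>S M g)" .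
qed

lemma nn_integral_cmult_pos:
  assumes "0 < c"
  shows "(\<integral>\<^sup>+x. ennreal c * f x \<partial>M) = ennreal c * (\<integral>\<^sup>+x. f x \<partial>M)"
proof (rule antisym)
  have "ennreal (1/c) * (\<integral>\<^sup>+x. ennreal c * f x \<partial>M) \<le> (\<integral>\<^sup>+x. ennreal (1/c) * (ennreal c * f x) \<partial>M)"
    by (rule nn_integral_cmult_le)
  also have "\<dots> = (\<integral>\<^sup>+x. f x \<partial>M)"
    using assms by (simp add: mult.assoc[symmetric] ennreal_mult[symmetric])
  finally have "ennreal c * (ennreal (1/c) * (\<integral>\<^sup>+x. ennreal c * f x \<partial>M)) \<le> ennreal c * (\<integral>\<^sup>+x. f x \<partial>M)"
    by (rule mult_left_mono) simp
  then show "(\<integral>\<^sup>+x. ennreal c * f x \<partial>M) \<le> ennreal c * (\<integral>\<^sup>+x. f x \<partial>M)"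
    using assms by (simp add: mult.assoc[symmetric] ennreal_mult[symmetric])
qed (rule nn_integral_cmult_le)

lemma nn_integral_add_le:
  "(\<integral>\<^sup>+x. f x \<partial>M) + (\<integral>\<^sup>+x. g x \<partial>M) \<le> (\<integral>\<^sup>+x. f x + g x \<partial>M)"
proof -
  let ?S = "\<lambda>h. {s. simple_function M s \<and> s \<le> h}"
  have ne: "?S f \<noteq> {}" "?S g \<noteq> {}"
    by (auto intro!: exI[of _ "\<lambda>_. 0"] simp: le_fun_def)
  let ?R = "(SUP s\<in>?S (\<lambda>x. f x + g x). integral\<^sup>S M s)"
  have "integral\<^sup>S M s1 + integral\<^sup>S M s2 \<le> ?R" if "s1 \<in> ?S f" "s2 \<in> ?S g" for s1 s2
  proof -
    have "integral\<^sup>S M s1 + integral\<^sup>S M s2 = integral\<^sup>S M (\<lambda>x. s1 x + s2 x)"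
      using that by simp
    also have "\<dots> \<le> ?R"
      using that by (intro SUP_upper) (auto simp: le_fun_def intro!: add_mono)
    finally show ?thesis .
  qed
  then have "integral\<^sup>S M s1 + (SUP s\<in>?S g. integral\<^sup>S M s) \<le> ?R" if "s1 \<in> ?S f" for s1
    using that unfolding ennreal_SUP_add_right[OF ne(2)] by (intro SUP_least) blast
  then have "(SUP s\<in>?S f. integral\<^sup>S M s) + (SUP s\<in>?S g. integral\<^sup>S M s) \<le> ?R"
    unfolding ennreal_SUP_add_left[OF ne(1), symmetric] by (rule SUP_least)
  then show ?thesis unfolding nn_integral_def .
qed

lemma ennreal_le_mult_INF:
  fixes a :: ennreal
  assumes "0 < c" and le: "\<And>i. i \<in> I \<Longrightarrow> a \<le> ennreal c * g i"
  shows "a \<le> ennreal c * (INF i\<in>I. g i)"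
proof -
  have "ennreal (1 / c) * a \<le> (INF i\<in>I. g i)"
  proof (rule INF_greatest)
    fix i assume "i \<in> I"
    have "ennreal (1 / c) * a \<le> ennreal (1 / c) * (ennreal c * g i)"
      using le[OF \<open>i \<in> I\<close>] by (rule mult_left_mono) simp
    also have "\<dots> = g i"
      using assms(1) by (simp add: mult.assoc[symmetric] ennreal_mult[symmetric])
    finally show "ennreal (1 / c) * a \<le> g i" .
  qed
  then have "ennreal c * (ennreal (1 / c) * a) \<le> ennreal c * (INF i\<in>I. g i)"
    by (rule mult_left_mono) simp
  then show ?thesis
    using assms(1) by (simp add: mult.assoc[symmetric] ennreal_mult[symmetric])
qed

lemma square_diff_diff_le: "((p::real) - q - r)^2 \<le> 3 * p^2 + 3 * q^2 + 3 * r^2"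
proof -
  have "0 \<le> (p + q)^2 + (p + r)^2 + (q - r)^2" by simp
  then show ?thesis by (simp add: power2_eq_square algebra_simps)
qed

lemma square_add_le: "((a::real) + b)^2 \<le> 2 * a^2 + 2 * b^2"
proof -
  have "0 \<le> (a - b)^2" by simp
  then show ?thesis by (simp add: power2_eq_square algebra_simps)
qed

lemma norm_sub_perturbation_bounds:
  fixes a b D :: complex
  assumes "cmod D \<le> L * cmod (a - b)" "0 \<le> dt" "L * dt \<le> 1/4"
  shows "(3/4)^2 * (cmod (a - b))^2 \<le> (cmod ((a - b) - \<i> * of_real dt * D))^2"
    and "(cmod ((a - b) - \<i> * of_real dt * D))^2 \<le> (5/4)^2 * (cmod (a - b))^2"
proof -
  have "dt * cmod D \<le> dt * (L * cmod (a - b))"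
    using assms by (intro mult_left_mono) auto
  also have "\<dots> = (L * dt) * cmod (a - b)" by simp
  also have "\<dots> \<le> 1/4 * cmod (a - b)"
    using assms(3) by (intro mult_right_mono) auto
  finally have small: "cmod (\<i> * of_real dt * D) \<le> 1/4 * cmod (a - b)"
    using assms(2) by (simp add: norm_mult)
  have "3/4 * cmod (a - b) \<le> cmod ((a - b) - \<i> * of_real dt * D)"
    using norm_triangle_ineq2[of "a - b" "\<i> * of_real dt * D"] small by linarith
  then show "(3/4)^2 * (cmod (a - b))^2 \<le> (cmod ((a - b) - \<i> * of_real dt * D))^2"
    by (simp add: power_mult_distrib[symmetric] power_mono)
  have "cmod ((a - b) - \<i> * of_real dt * D) \<le> 5/4 * cmod (a - b)"
    using norm_triangle_ineq4[of "a - b" "\<i> * of_real dt * D"] small by linarith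
  then show "(cmod ((a - b) - \<i> * of_real dt * D))^2 \<le> (5/4)^2 * (cmod (a - b))^2"
    by (simp add: power_mult_distrib[symmetric] power_mono)
qed

section \<open>The Gaussian increment\<close>

lemma sets_gauss [measurable_cong]: "sets (gauss dt) = sets borel"
  by (simp add: gauss_def)

lemma space_gauss [simp]: "space (gauss dt) = UNIV"
  by (simp add: gauss_def)

lemma prob_space_gauss: "0 < dt \<Longrightarrow> prob_space (gauss dt)"
  unfolding gauss_def by (rule prob_space_normal_density) simp

lemma measurable_pair_gauss:
  "f \<in> borel_measurable (borel \<Otimes>\<^sub>M borel) \<Longrightarrow> f \<in> borel_measurable (borel \<Otimes>\<^sub>M gauss dt)"
  using measurable_cong_sets[OF sets_pair_measure_cong[OF refl sets_gauss[of dt, symmetric]] refl]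
  by simp

lemma nn_integral_gauss:
  assumes "g \<in> borel_measurable borel"
  shows "(\<integral>\<^sup>+w. g w \<partial>gauss dt) = (\<integral>\<^sup>+w. ennreal (normal_density 0 (sqrt dt) w) * g w \<partial>lborel)"
  unfolding gauss_def using assms by (subst nn_integral_density) auto

lemma integrable_gauss_iff:
  fixes g :: "real \<Rightarrow> real"
  assumes [measurable]: "g \<in> borel_measurable borel"
  shows "integrable (gauss dt) g = integrable lborel (\<lambda>w. normal_density 0 (sqrt dt) w * g w)"
  unfolding gauss_def by (subst integrable_density) auto

lemma integral_gauss:
  fixes g :: "real \<Rightarrow> real"
  assumes [measurable]: "g \<in> borel_measurable borel"
  shows "integral\<^sup>L (gauss dt) g = (\<integral>w. normal_density 0 (sqrt dt) w * g w \<partial>lborel)"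
  unfolding gauss_def by (subst integral_density) auto

lemma gauss_moments:
  assumes "0 < dt"
  shows "integrable (gauss dt) (\<lambda>w. w)" "integral\<^sup>L (gauss dt) (\<lambda>w. w) = 0"
    "integrable (gauss dt) (\<lambda>w. w^2)" "integral\<^sup>L (gauss dt) (\<lambda>w. w^2) = dt"
proof -
  have s: "0 < sqrt dt" using assms by simp
  show "integrable (gauss dt) (\<lambda>w. w)"
    using integrable_normal_moment[OF s, of 0 1] by (subst integrable_gauss_iff) auto
  show "integral\<^sup>L (gauss dt) (\<lambda>w. w) = 0"
    using integral_normal_moment_odd[OF s, of 0 0] by (subst integral_gauss) auto
  show "integrable (gauss dt) (\<lambda>w. w^2)"
    using integrable_normal_moment[OF s, of 0 2] by (subst integrable_gauss_iff) auto
  show "integral\<^sup>L (gauss dt) (\<lambda>w. w^2) = dt"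
    using integral_normal_moment_even[OF s, of 0 1] assms by (subst integral_gauss) auto
qed

lemma nn_integral_gauss_square: "0 < dt \<Longrightarrow> (\<integral>\<^sup>+w. ennreal (w^2) \<partial>gauss dt) = ennreal dt"
  using nn_integral_eq_integral[OF gauss_moments(3)] gauss_moments(4) by simp

lemma square_le_exp_plus_exp_uminus: "(w::real)^2 \<le> 2 * exp w + 2 * exp (- w)"
proof -
  have "1 + \<bar>w\<bar> + \<bar>w\<bar>^2 / 2 \<le> exp \<bar>w\<bar>" by (rule exp_lower_Taylor_quadratic) simp
  moreover have "1 - \<bar>w\<bar> \<le> exp (- \<bar>w\<bar>)" using exp_ge_add_one_self[of "- \<bar>w\<bar>"] by simp
  ultimately have "w^2 \<le> 2 * exp \<bar>w\<bar> + 2 * exp (- \<bar>w\<bar>)" by simp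
  then show ?thesis by (cases "0 \<le> w") (simp_all add: add.commute)
qed

lemma normal_density_mult_exp:
  assumes "0 < dt"
  shows "normal_density 0 (sqrt dt) w * exp (c * w)
    = exp (c^2 * dt / 2) * normal_density 0 (sqrt dt) (w - c * dt)"
proof -
  have "- w\<^sup>2 / (2 * dt) + c * w = - (w - c * dt)\<^sup>2 / (2 * dt) + c^2 * dt / 2"
    using assms by (simp add: power2_eq_square field_simps)
  then show ?thesis using assms
    unfolding normal_density_def by (simp add: exp_add[symmetric] algebra_simps)
qed

lemma nn_integral_gauss_exp_tilt:
  assumes "0 < dt" and [measurable]: "g \<in> borel_measurable borel"
  shows "(\<integral>\<^sup>+w. ennreal (exp (c * w)) * g w \<partial>gauss dt)
    = ennreal (exp (c^2 * dt / 2)) * (\<integral>\<^sup>+w. g (w + c * dt) \<partial>gauss dt)"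
proof -
  let ?\<phi> = "normal_density 0 (sqrt dt)"
  have "(\<integral>\<^sup>+w. ennreal (exp (c * w)) * g w \<partial>gauss dt)
      = (\<integral>\<^sup>+w. ennreal (exp (c^2 * dt / 2)) * (ennreal (?\<phi> (w - c * dt)) * g w) \<partial>lborel)"
    by (subst nn_integral_gauss, measurable)
       (simp add: mult.assoc[symmetric] ennreal_mult'[symmetric] normal_density_mult_exp[OF assms(1)])
  also have "\<dots> = ennreal (exp (c^2 * dt / 2)) * (\<integral>\<^sup>+w. ennreal (?\<phi> (w - c * dt)) * g w \<partial>lborel)"
    by (rule nn_integral_cmult) measurable
  also have "(\<integral>\<^sup>+w. ennreal (?\<phi> (w - c * dt)) * g w \<partial>lborel) = (\<integral>\<^sup>+w. ennreal (?\<phi> w) * g (w + c * dt) \<partial>lborel)"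
    using nn_integral_real_affine[of "\<lambda>w. ennreal (?\<phi> (w - c * dt)) * g w" 1 "c * dt"]
    by (simp add: add.commute)
  also have "\<dots> = (\<integral>\<^sup>+w. g (w + c * dt) \<partial>gauss dt)"
    by (rule nn_integral_gauss[symmetric]) measurable
  finally show ?thesis .
qed

text \<open>Cameron--Martin: the weight \<open>w\<^sup>2\<close> is dominated by \<open>e\<^sup>w + e\<^sup>-\<^sup>w\<close>, and each exponential
  tilt of the Gaussian is a Gaussian shifted by \<open>\<plusminus>dt\<close>.\<close>
lemma nn_integral_gauss_mult_square_le_shifts:
  assumes "0 < dt" and [measurable]: "g \<in> borel_measurable borel"
  shows "(\<integral>\<^sup>+w. g w * ennreal (w^2) \<partial>gauss dt)
    \<le> 2 * ennreal (exp (dt / 2)) * ((\<integral>\<^sup>+w. g (w + dt) \<partial>gauss dt) + (\<integral>\<^sup>+w. g (w - dt) \<partial>gauss dt))"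
proof -
  have "(\<integral>\<^sup>+w. g w * ennreal (w^2) \<partial>gauss dt)
      \<le> (\<integral>\<^sup>+w. 2 * (ennreal (exp (1 * w)) * g w + ennreal (exp ((-1) * w)) * g w) \<partial>gauss dt)"
  proof (rule nn_integral_mono)
    fix w
    have "ennreal (w^2) \<le> ennreal (2 * (exp w + exp (-w)))"
      using square_le_exp_plus_exp_uminus[of w] by (intro ennreal_leI) simp
    then have "g w * ennreal (w^2) \<le> g w * (2 * (ennreal (exp w) + ennreal (exp (-w))))"
      by (intro mult_left_mono) (simp_all add: ennreal_mult ennreal_plus)
    then show "g w * ennreal (w^2) \<le> 2 * (ennreal (exp (1 * w)) * g w + ennreal (exp ((-1) * w)) * g w)"
      by (simp add: distrib_left mult.commute mult.left_commute)
  qed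
  also have "\<dots> = 2 * ((\<integral>\<^sup>+w. ennreal (exp (1 * w)) * g w \<partial>gauss dt)
      + (\<integral>\<^sup>+w. ennreal (exp ((-1) * w)) * g w \<partial>gauss dt))"
    by (subst nn_integral_cmult, measurable, subst nn_integral_add, measurable)
  also have "\<dots> = 2 * ennreal (exp (dt / 2)) * ((\<integral>\<^sup>+w. g (w + dt) \<partial>gauss dt) + (\<integral>\<^sup>+w. g (w - dt) \<partial>gauss dt))"
    using nn_integral_gauss_exp_tilt[OF assms, of 1] nn_integral_gauss_exp_tilt[OF assms, of "-1"]
    by (simp add: distrib_left mult.assoc)
  finally show ?thesis .
qed

lemma normal_density_mult_square_le:
  assumes "0 < dt"
  shows "normal_density 0 (sqrt dt) w * w^2 \<le> 2 * dt / sqrt (2 * pi * dt)"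
proof -
  let ?t = "w^2 / (2*dt)"
  have "?t \<le> exp ?t" using exp_ge_add_one_self[of ?t] by linarith
  then have "w^2 * exp (-?t) \<le> 2 * dt" using assms by (simp add: exp_minus field_simps)
  moreover have "normal_density 0 (sqrt dt) w * w^2 = (w^2 * exp (-?t)) / sqrt (2 * pi * dt)"
    using assms by (simp add: normal_density_def)
  ultimately show ?thesis
    using assms by (simp add: divide_right_mono)
qed

lemma nn_integral_gauss_mult_square_le_lborel:
  assumes "0 < dt" "0 < s" and [measurable]: "g \<in> borel_measurable borel"
  shows "(\<integral>\<^sup>+w. g (y + s * w) * ennreal (w^2) \<partial>gauss dt)
    \<le> ennreal (2 * dt / sqrt (2 * pi * dt) / s) * (\<integral>\<^sup>+z. g z \<partial>lborel)"
proof -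
  let ?K = "2 * dt / sqrt (2 * pi * dt)"
  have "(\<integral>\<^sup>+w. g (y + s * w) * ennreal (w^2) \<partial>gauss dt)
      = (\<integral>\<^sup>+w. ennreal (normal_density 0 (sqrt dt) w * w^2) * g (y + s * w) \<partial>lborel)"
    by (subst nn_integral_gauss, measurable) (simp add: ennreal_mult ac_simps)
  also have "\<dots> \<le> (\<integral>\<^sup>+w. ennreal ?K * g (y + s * w) \<partial>lborel)"
    using normal_density_mult_square_le[OF assms(1)]
    by (intro nn_integral_mono mult_right_mono ennreal_leI) auto
  also have "\<dots> = ennreal ?K * (\<integral>\<^sup>+w. g (y + s * w) \<partial>lborel)"
    by (rule nn_integral_cmult) measurable
  also have "(\<integral>\<^sup>+w. g (y + s * w) \<partial>lborel) = ennreal (1 / s) * (\<integral>\<^sup>+z. g z \<partial>lborel)"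
    using nn_integral_real_affine[of g s y] assms
    by (simp add: mult.assoc[symmetric] ennreal_mult[symmetric])
  also have "ennreal ?K * (ennreal (1 / s) * (\<integral>\<^sup>+z. g z \<partial>lborel)) = ennreal (?K / s) * (\<integral>\<^sup>+z. g z \<partial>lborel)"
    using assms by (simp add: mult.assoc[symmetric] ennreal_mult[symmetric])
  finally show ?thesis .
qed

section \<open>The discretised Brownian path\<close>

lemma prob_space_incr_space: "0 < dt \<Longrightarrow> prob_space (incr_space dt n)"
  unfolding incr_space_def by (rule prob_space_PiM) (simp add: prob_space_gauss)

lemma measurable_incr_component:
  "j < n \<Longrightarrow> (\<lambda>om. om j) \<in> borel_measurable (incr_space dt n)"
  unfolding incr_space_def by (auto intro!: measurable_PiM_component_rev)

lemma measurable_Xp [measurable]: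
  assumes "j \<le> n"
  shows "Xp nu x j \<in> borel_measurable (incr_space dt n)"
proof -
  have "(\<lambda>om. \<Sum>i<j. om i) \<in> borel_measurable (incr_space dt n)"
    using assms by (intro borel_measurable_sum measurable_incr_component) auto
  then show ?thesis unfolding Xp_def[abs_def] by measurable
qed

lemma Xp_fun_upd_same: "Xp nu x j (om(j := w)) = Xp nu x j om"
  unfolding Xp_def by (auto intro!: sum.cong)

lemma Xp_fun_upd_Suc: "Xp nu x (Suc j) (om(j := w)) = Xp nu x j om + sqrt nu * w"
  using Xp_fun_upd_same[of nu x j om w] by (simp add: Xp_def algebra_simps)

lemma nn_integral_incr_space_Suc:
  assumes "0 < dt" and h: "h \<in> borel_measurable (incr_space dt (Suc j))"
  shows "(\<integral>\<^sup>+om. h om \<partial>incr_space dt (Suc j))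
    = (\<integral>\<^sup>+om. (\<integral>\<^sup>+w. h (om(j := w)) \<partial>gauss dt) \<partial>incr_space dt j)"
proof -
  interpret product_sigma_finite "\<lambda>_::nat. gauss dt"
    unfolding product_sigma_finite_def
    using prob_space_gauss[OF assms(1)] prob_space_imp_sigma_finite by blast
  have e: "{..<Suc j} = insert j {..<j}" by auto
  show ?thesis
    unfolding incr_space_def e
    by (rule product_nn_integral_insert) (use h in \<open>auto simp: incr_space_def e\<close>)
qed

lemma nn_integral_Xp_Suc:
  assumes "0 < dt" and [measurable]: "(\<lambda>(y, w). g y w) \<in> borel_measurable (borel \<Otimes>\<^sub>M borel)"
  shows "(\<integral>\<^sup>+om. \<integral>\<^sup>+w. g (Xp nu x j om + sqrt nu * w) w \<partial>gauss dt \<partial>incr_space dt j)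
    = (\<integral>\<^sup>+om. g (Xp nu x (Suc j) om) (om j) \<partial>incr_space dt (Suc j))"
proof -
  have [measurable]: "(\<lambda>om. om j) \<in> borel_measurable (incr_space dt (Suc j))"
    by (rule measurable_incr_component) simp
  show ?thesis
    by (subst nn_integral_incr_space_Suc[OF assms(1)]) (auto simp: Xp_fun_upd_Suc)
qed

lemma measurable_nn_integral_Xp_step:
  assumes "0 < dt" and [measurable]: "(\<lambda>(y, w). g y w) \<in> borel_measurable (borel \<Otimes>\<^sub>M borel)"
  shows "(\<lambda>om. \<integral>\<^sup>+w. g (Xp nu x j om + sqrt nu * w) w \<partial>gauss dt) \<in> borel_measurable (incr_space dt j)"
proof -
  interpret gauss: prob_space "gauss dt" using prob_space_gauss[OF assms(1)] .
  have [measurable]: "Xp nu x j \<in> borel_measurable (incr_space dt j)" by (rule measurable_Xp) simp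
  have "(\<lambda>p. (Xp nu x j (fst p) + sqrt nu * snd p, snd p))
      \<in> measurable (incr_space dt j \<Otimes>\<^sub>M gauss dt) (borel \<Otimes>\<^sub>M borel)"
    by measurable
  from measurable_comp[OF this assms(2)]
  show ?thesis
    by (intro gauss.borel_measurable_nn_integral) (simp add: comp_def case_prod_beta')
qed

lemma nn_integral_Xp_Suc_mult_incr_square_le_shifts:
  assumes "0 < dt" and [measurable]: "g \<in> borel_measurable borel"
  shows "(\<integral>\<^sup>+om. g (Xp nu x (Suc j) om) * ennreal ((om j)^2) \<partial>incr_space dt (Suc j))
    \<le> 2 * ennreal (exp (dt / 2)) * ((\<integral>\<^sup>+om. g (Xp nu (x + sqrt nu * dt) (Suc j) om) \<partial>incr_space dt (Suc j))
        + (\<integral>\<^sup>+om. g (Xp nu (x - sqrt nu * dt) (Suc j) om) \<partial>incr_space dt (Suc j)))"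
proof -
  let ?I = "\<lambda>x' om. \<integral>\<^sup>+w. g (Xp nu x' j om + sqrt nu * w) \<partial>gauss dt"
  have [measurable]: "?I x' \<in> borel_measurable (incr_space dt j)" for x'
    using measurable_nn_integral_Xp_step[OF assms(1), of "\<lambda>y w. g y"] by simp
  have "(\<integral>\<^sup>+om. g (Xp nu x (Suc j) om) * ennreal ((om j)^2) \<partial>incr_space dt (Suc j))
      = (\<integral>\<^sup>+om. \<integral>\<^sup>+w. g (Xp nu x j om + sqrt nu * w) * ennreal (w^2) \<partial>gauss dt \<partial>incr_space dt j)"
    by (rule nn_integral_Xp_Suc[OF assms(1), symmetric]) measurable
  also have "\<dots> \<le> (\<integral>\<^sup>+om. 2 * ennreal (exp (dt / 2)) * (?I (x + sqrt nu * dt) om + ?I (x - sqrt nu * dt) om) \<partial>incr_space dt j)"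
  proof (rule nn_integral_mono)
    fix om
    have "Xp nu x j om + sqrt nu * (w + c) = Xp nu (x + sqrt nu * c) j om + sqrt nu * w" for w c
      by (simp add: Xp_def algebra_simps)
    then show "(\<integral>\<^sup>+w. g (Xp nu x j om + sqrt nu * w) * ennreal (w^2) \<partial>gauss dt)
        \<le> 2 * ennreal (exp (dt / 2)) * (?I (x + sqrt nu * dt) om + ?I (x - sqrt nu * dt) om)"
      using nn_integral_gauss_mult_square_le_shifts[OF assms(1), of "\<lambda>w. g (Xp nu x j om + sqrt nu * w)"]
      by (simp add: diff_conv_add_uminus del: add_uminus_conv_diff)
  qed
  also have "\<dots> = 2 * ennreal (exp (dt / 2)) * ((\<integral>\<^sup>+om. ?I (x + sqrt nu * dt) om \<partial>incr_space dt j)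
      + (\<integral>\<^sup>+om. ?I (x - sqrt nu * dt) om \<partial>incr_space dt j))"
    by (simp add: nn_integral_cmult nn_integral_add)
  also have "\<dots> = 2 * ennreal (exp (dt / 2)) * ((\<integral>\<^sup>+om. g (Xp nu (x + sqrt nu * dt) (Suc j) om) \<partial>incr_space dt (Suc j))
        + (\<integral>\<^sup>+om. g (Xp nu (x - sqrt nu * dt) (Suc j) om) \<partial>incr_space dt (Suc j)))"
    using nn_integral_Xp_Suc[OF assms(1), of "\<lambda>y w. g y"] by simp
  finally show ?thesis .
qed

lemma nn_integral_Xp_Suc_mult_incr_square_le_lborel:
  assumes "0 < dt" "0 < nu" and [measurable]: "g \<in> borel_measurable borel"
  shows "(\<integral>\<^sup>+om. g (Xp nu x (Suc j) om) * ennreal ((om j)^2) \<partial>incr_space dt (Suc j))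
    \<le> ennreal (2 * dt / sqrt (2 * pi * dt) / sqrt nu) * (\<integral>\<^sup>+z. g z \<partial>lborel)"
proof -
  interpret prob_space "incr_space dt j" using prob_space_incr_space[OF assms(1)] .
  have "(\<integral>\<^sup>+om. g (Xp nu x (Suc j) om) * ennreal ((om j)^2) \<partial>incr_space dt (Suc j))
      = (\<integral>\<^sup>+om. \<integral>\<^sup>+w. g (Xp nu x j om + sqrt nu * w) * ennreal (w^2) \<partial>gauss dt \<partial>incr_space dt j)"
    by (rule nn_integral_Xp_Suc[OF assms(1), symmetric]) measurable
  also have "\<dots> \<le> (\<integral>\<^sup>+om. ennreal (2 * dt / sqrt (2 * pi * dt) / sqrt nu) * (\<integral>\<^sup>+z. g z \<partial>lborel) \<partial>incr_space dt j)"
    using assms by (intro nn_integral_mono nn_integral_gauss_mult_square_le_lborel) auto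
  finally show ?thesis by (simp add: emeasure_space_1)
qed

lemma moment_finite_of_bounded:
  assumes "0 < dt" and "\<And>y. cmod (G y) \<le> B"
  shows "(\<integral>\<^sup>+om. ennreal ((cmod (G (Xp nu x n om)))^2) \<partial>incr_space dt n) < \<infinity>"
proof -
  interpret prob_space "incr_space dt n" by (rule prob_space_incr_space[OF assms(1)])
  have "(\<integral>\<^sup>+om. ennreal ((cmod (G (Xp nu x n om)))^2) \<partial>incr_space dt n) \<le> (\<integral>\<^sup>+om. ennreal (B^2) \<partial>incr_space dt n)"
    using assms(2) by (intro nn_integral_mono ennreal_leI power_mono) auto
  then show ?thesis by (simp add: emeasure_space_1 le_less_trans)
qed

lemma moment_incr_square_finite:
  assumes "0 < dt" "0 < nu" and [measurable]: "Z \<in> borel_measurable borel"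
    and fin: "(\<integral>\<^sup>+z. ennreal ((cmod (Z z))^2) \<partial>lborel) < \<infinity> \<or> (\<forall>x'. EXp nu dt x' (Suc j) (\<lambda>y. (cmod (Z y))^2) < \<infinity>)"
  shows "(\<integral>\<^sup>+om. ennreal ((cmod (Z (Xp nu x (Suc j) om)))^2 * (om j)^2) \<partial>incr_space dt (Suc j)) < \<infinity>"
proof -
  let ?g = "\<lambda>y. ennreal ((cmod (Z y))^2)"
  have eq: "(\<integral>\<^sup>+om. ennreal ((cmod (Z (Xp nu x (Suc j) om)))^2 * (om j)^2) \<partial>incr_space dt (Suc j))
      = (\<integral>\<^sup>+om. ?g (Xp nu x (Suc j) om) * ennreal ((om j)^2) \<partial>incr_space dt (Suc j))"
    by (simp add: ennreal_mult)
  from fin show ?thesis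
  proof
    assume "(\<integral>\<^sup>+z. ennreal ((cmod (Z z))^2) \<partial>lborel) < \<infinity>"
    then show ?thesis
      unfolding eq using nn_integral_Xp_Suc_mult_incr_square_le_lborel[OF assms(1,2), where g="?g" and x=x and j=j]
      by (simp add: ennreal_mult_less_top le_less_trans)
  next
    assume "\<forall>x'. EXp nu dt x' (Suc j) (\<lambda>y. (cmod (Z y))^2) < \<infinity>"
    then show ?thesis
      unfolding eq using nn_integral_Xp_Suc_mult_incr_square_le_shifts[OF assms(1), where g="?g" and nu=nu and x=x and j=j]
      by (simp add: EXp_def ennreal_mult_less_top le_less_trans)
  qed
qed

section \<open>One step of the scheme: the loss as a regression\<close>

text \<open>For a fixed starting point \<open>x\<close> and step \<open>j\<close>, \<open>Up\<close> and \<open>Zp\<close> are the approximations at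
  time \<open>t\<^sub>j\<^sub>+\<^sub>1\<close>.\<close>
locale scheme_step =
  fixes nu dt L c0 :: real and j :: nat and x :: real
    and Up Zp :: "real \<Rightarrow> complex" and f :: "real \<Rightarrow> real \<Rightarrow> complex \<Rightarrow> complex"
  assumes nu_pos: "0 < nu" and dt_pos: "0 < dt" and L_pos: "0 < L" and L_dt: "L * dt \<le> 1/4"
    and c0_nonneg: "0 \<le> c0"
    and measurable_Up [measurable]: "Up \<in> borel_measurable borel"
    and measurable_Zp [measurable]: "Zp \<in> borel_measurable borel"
    and moment_Up: "(\<integral>\<^sup>+om. ennreal ((cmod (Up (Xp nu x (Suc j) om)))^2) \<partial>incr_space dt (Suc j)) < \<infinity>"
    and moment_Zp:
      "(\<integral>\<^sup>+om. ennreal ((cmod (Zp (Xp nu x (Suc j) om)))^2 * (om j)^2) \<partial>incr_space dt (Suc j)) < \<infinity>"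
    and measurable_f: "(\<lambda>(y, z). f (real j * dt) y z) \<in> borel_measurable (borel \<Otimes>\<^sub>M borel)"
    and lipschitz_f: "\<And>y z z'. cmod (f (real j * dt) y z - f (real j * dt) y z') \<le> L * cmod (z - z')"
    and growth_f: "\<And>y z. cmod (f (real j * dt) y z) \<le> c0 + L * cmod z"
begin

sublocale gauss: prob_space "gauss dt"
  by (rule prob_space_gauss[OF dt_pos])

sublocale incr: prob_space "incr_space dt j"
  by (rule prob_space_incr_space[OF dt_pos])

lemma measurable_Xp_j [measurable]: "Xp nu x j \<in> borel_measurable (incr_space dt j)"
  by (rule measurable_Xp) simp

lemma measurable_f_comp [measurable]:
  assumes "g \<in> borel_measurable M" "U \<in> borel_measurable M"
  shows "(\<lambda>a. f (real j * dt) (g a) (U a)) \<in> borel_measurable M"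
proof -
  have "(\<lambda>a. (g a, U a)) \<in> measurable M (borel \<Otimes>\<^sub>M borel)" using assms by measurable
  from measurable_comp[OF this measurable_f] show ?thesis by (simp add: comp_def)
qed

text \<open>Given \<open>X\<^sub>t\<^sub>j = y\<close> and \<open>\<delta>W\<^sub>t\<^sub>j = w\<close>, the loss compares the responses \<open>targetR\<close>, \<open>targetI\<close>
  (everything in \<open>L\<^sub>j\<close> that does not depend on the trainable networks) with functions that are
  affine in \<open>w\<close>; minimising the loss is thus a least-squares regression on \<open>1\<close> and \<open>w\<close>.\<close>
definition targetR :: "real \<Rightarrow> real \<Rightarrow> real" where
  "targetR y w = Re (Up (y + sqrt nu * w))
     - sqrt nu / 2 * (Re (Zp (y + sqrt nu * w)) + Im (Zp (y + sqrt nu * w))) * w"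

definition targetI :: "real \<Rightarrow> real \<Rightarrow> real" where
  "targetI y w = Im (Up (y + sqrt nu * w))
     + sqrt nu / 2 * (Re (Zp (y + sqrt nu * w)) - Im (Zp (y + sqrt nu * w))) * w"

definition regular :: "real \<Rightarrow> bool" where
  "regular y \<longleftrightarrow> (\<integral>\<^sup>+w. ennreal ((cmod (Up (y + sqrt nu * w)))^2) \<partial>gauss dt) < \<infinity>
     \<and> (\<integral>\<^sup>+w. ennreal ((cmod (Zp (y + sqrt nu * w)))^2 * w^2) \<partial>gauss dt) < \<infinity>"

lemma measurable_targets [measurable]:
  "(\<lambda>(y, w). targetR y w) \<in> borel_measurable (borel \<Otimes>\<^sub>M gauss dt)"
  "(\<lambda>(y, w). targetI y w) \<in> borel_measurable (borel \<Otimes>\<^sub>M gauss dt)"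
  by (rule measurable_pair_gauss, simp add: targetR_def targetI_def)+

lemma measurable_targets_Pair2 [measurable]:
  "targetR y \<in> borel_measurable (gauss dt)" "targetI y \<in> borel_measurable (gauss dt)"
  using measurable_Pair2[OF measurable_targets(1), of y] measurable_Pair2[OF measurable_targets(2), of y]
  by simp_all

lemma regular_integrable:
  assumes "regular y"
  defines "U \<equiv> \<lambda>w. Up (y + sqrt nu * w)" and "Z \<equiv> \<lambda>w. Zp (y + sqrt nu * w)"
  shows "integrable (gauss dt) (\<lambda>w. Re (U w))" "integrable (gauss dt) (\<lambda>w. Im (U w))"
    "integrable (gauss dt) (\<lambda>w. Re (U w) * w)" "integrable (gauss dt) (\<lambda>w. Im (U w) * w)"
    "integrable (gauss dt) (\<lambda>w. Re (Z w) * w)" "integrable (gauss dt) (\<lambda>w. Im (Z w) * w)"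
    "integrable (gauss dt) (\<lambda>w. Re (Z w) * w^2)" "integrable (gauss dt) (\<lambda>w. Im (Z w) * w^2)"
    "integrable (gauss dt) (\<lambda>w. (targetR y w)^2)" "integrable (gauss dt) (\<lambda>w. (targetI y w)^2)"
proof -
  have [measurable]: "U \<in> borel_measurable (gauss dt)" "Z \<in> borel_measurable (gauss dt)"
    unfolding U_def Z_def by measurable
  have U2: "integrable (gauss dt) (\<lambda>w. (Re (U w))^2)" "integrable (gauss dt) (\<lambda>w. (Im (U w))^2)"
    by (rule square_integrable_Re_Im; use assms in \<open>simp add: regular_def U_def\<close>)+
  have "(\<integral>\<^sup>+w. ennreal ((cmod (Z w * of_real w))^2) \<partial>gauss dt) < \<infinity>"
    using assms by (simp add: regular_def Z_def norm_mult power_mult_distrib)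
  then have Z2: "integrable (gauss dt) (\<lambda>w. (Re (Z w) * w)^2)" "integrable (gauss dt) (\<lambda>w. (Im (Z w) * w)^2)"
    using square_integrable_Re_Im[of "\<lambda>w. Z w * of_real w" "gauss dt"] by simp_all
  note w2 = gauss_moments(3)[OF dt_pos]
  show "integrable (gauss dt) (\<lambda>w. Re (U w))"
    by (rule gauss.square_integrable_imp_integrable[OF _ U2(1)]) measurable
  show "integrable (gauss dt) (\<lambda>w. Im (U w))"
    by (rule gauss.square_integrable_imp_integrable[OF _ U2(2)]) measurable
  show "integrable (gauss dt) (\<lambda>w. Re (Z w) * w)"
    by (rule gauss.square_integrable_imp_integrable[OF _ Z2(1)]) measurable
  show "integrable (gauss dt) (\<lambda>w. Im (Z w) * w)"
    by (rule gauss.square_integrable_imp_integrable[OF _ Z2(2)]) measurable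
  show "integrable (gauss dt) (\<lambda>w. Re (U w) * w)"
    by (rule integrable_mult_of_square_integrable[OF _ _ U2(1) w2]) measurable
  show "integrable (gauss dt) (\<lambda>w. Im (U w) * w)"
    by (rule integrable_mult_of_square_integrable[OF _ _ U2(2) w2]) measurable
  have "integrable (gauss dt) (\<lambda>w. (Re (Z w) * w) * w)" "integrable (gauss dt) (\<lambda>w. (Im (Z w) * w) * w)"
    by (rule integrable_mult_of_square_integrable[OF _ _ Z2(1) w2] 
        integrable_mult_of_square_integrable[OF _ _ Z2(2) w2], measurable)+
  then show "integrable (gauss dt) (\<lambda>w. Re (Z w) * w^2)" "integrable (gauss dt) (\<lambda>w. Im (Z w) * w^2)"
    by (simp_all add: power2_eq_square mult.assoc)
  have ZZ: "integrable (gauss dt) (\<lambda>w. (Re (Z w) * w + Im (Z w) * w)^2)"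
    "integrable (gauss dt) (\<lambda>w. (Re (Z w) * w - Im (Z w) * w)^2)"
    by (rule square_integrable_add[OF _ _ Z2] square_integrable_diff[OF _ _ Z2], measurable)+
  define c where "c = sqrt nu / 2"
  have cZ: "integrable (gauss dt) (\<lambda>w. (c * (Re (Z w) * w + Im (Z w) * w))^2)"
    "integrable (gauss dt) (\<lambda>w. (c * (Re (Z w) * w - Im (Z w) * w))^2)"
    using ZZ by (simp_all add: power_mult_distrib)
  have "integrable (gauss dt) (\<lambda>w. (Re (U w) - c * (Re (Z w) * w + Im (Z w) * w))^2)"
    "integrable (gauss dt) (\<lambda>w. (Im (U w) + c * (Re (Z w) * w - Im (Z w) * w))^2)"
    by (rule square_integrable_diff[OF _ _ U2(1) cZ(1)] square_integrable_add[OF _ _ U2(2) cZ(2)], measurable)+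
  then show "integrable (gauss dt) (\<lambda>w. (targetR y w)^2)" "integrable (gauss dt) (\<lambda>w. (targetI y w)^2)"
    by (simp_all add: targetR_def targetI_def U_def Z_def c_def algebra_simps)
qed

lemma nn_integral_step_moments_finite:
  "(\<integral>\<^sup>+om. \<integral>\<^sup>+w. ennreal ((cmod (Up (Xp nu x j om + sqrt nu * w)))^2) \<partial>gauss dt \<partial>incr_space dt j) < \<infinity>"
  "(\<integral>\<^sup>+om. \<integral>\<^sup>+w. ennreal ((cmod (Zp (Xp nu x j om + sqrt nu * w)))^2 * w^2) \<partial>gauss dt \<partial>incr_space dt j) < \<infinity>"
  using moment_Up moment_Zp
  by (simp_all add: nn_integral_Xp_Suc[OF dt_pos, of "\<lambda>y w. ennreal ((cmod (Up y))^2)"]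
      nn_integral_Xp_Suc[OF dt_pos, of "\<lambda>y w. ennreal ((cmod (Zp y))^2 * w^2)"])

lemma AE_regular: "AE om in incr_space dt j. regular (Xp nu x j om)"
proof -
  note fin = nn_integral_step_moments_finite[THEN less_imp_neq]
  have "(\<lambda>om. \<integral>\<^sup>+w. ennreal ((cmod (Up (Xp nu x j om + sqrt nu * w)))^2) \<partial>gauss dt)
      \<in> borel_measurable (incr_space dt j)"
    "(\<lambda>om. \<integral>\<^sup>+w. ennreal ((cmod (Zp (Xp nu x j om + sqrt nu * w)))^2 * w^2) \<partial>gauss dt)
      \<in> borel_measurable (incr_space dt j)"
    by (rule measurable_nn_integral_Xp_step[OF dt_pos]; simp)+
  from nn_integral_PInf_AE[OF this(1) fin(1)] nn_integral_PInf_AE[OF this(2) fin(2)]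
  show ?thesis by eventually_elim (simp add: regular_def less_top)
qed

definition meanR :: "real \<Rightarrow> real" where "meanR y = (\<integral>w. targetR y w \<partial>gauss dt)"

definition meanI :: "real \<Rightarrow> real" where "meanI y = (\<integral>w. targetI y w \<partial>gauss dt)"

definition covR :: "real \<Rightarrow> real" where "covR y = (\<integral>w. targetR y w * w \<partial>gauss dt)"

definition covI :: "real \<Rightarrow> real" where "covI y = (\<integral>w. targetI y w * w \<partial>gauss dt)"

definition residualR :: "real \<Rightarrow> real" where
  "residualR y = (\<integral>w. (targetR y w)^2 \<partial>gauss dt) - (meanR y)^2 - (covR y)^2 / dt"

definition residualI :: "real \<Rightarrow> real" where
  "residualI y = (\<integral>w. (targetI y w)^2 \<partial>gauss dt) - (meanI y)^2 - (covI y)^2 / dt"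

lemma measurable_regression_coefficients [measurable]:
  "meanR \<in> borel_measurable borel" "meanI \<in> borel_measurable borel"
  "covR \<in> borel_measurable borel" "covI \<in> borel_measurable borel"
  "residualR \<in> borel_measurable borel" "residualI \<in> borel_measurable borel"
proof -
  have [measurable]: "(\<lambda>(y, w). targetR y w * w) \<in> borel_measurable (borel \<Otimes>\<^sub>M gauss dt)"
    "(\<lambda>(y, w). (targetR y w)^2) \<in> borel_measurable (borel \<Otimes>\<^sub>M gauss dt)"
    "(\<lambda>(y, w). targetI y w * w) \<in> borel_measurable (borel \<Otimes>\<^sub>M gauss dt)"
    "(\<lambda>(y, w). (targetI y w)^2) \<in> borel_measurable (borel \<Otimes>\<^sub>M gauss dt)"
    using measurable_targets by (simp_all add: case_prod_beta') measurable
  note gauss.borel_measurable_lebesgue_integral [measurable]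
  show "meanR \<in> borel_measurable borel" "meanI \<in> borel_measurable borel"
    "covR \<in> borel_measurable borel" "covI \<in> borel_measurable borel"
    "residualR \<in> borel_measurable borel" "residualI \<in> borel_measurable borel"
    unfolding meanR_def[abs_def] meanI_def[abs_def] covR_def[abs_def] covI_def[abs_def]
      residualR_def[abs_def] residualI_def[abs_def] by measurable
qed

lemma nn_integral_target_regression:
  assumes "regular y"
  shows "(\<integral>\<^sup>+w. ennreal ((targetR y w - a - b * w)^2) \<partial>gauss dt)
      = ennreal (residualR y + (meanR y - a)^2 + dt * (covR y / dt - b)^2)"
    and "(\<integral>\<^sup>+w. ennreal ((targetI y w - a - b * w)^2) \<partial>gauss dt)
      = ennreal (residualI y + (meanI y - a)^2 + dt * (covI y / dt - b)^2)"
    and "0 \<le> residualR y" "0 \<le> residualI y"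
proof -
  note W = gauss_moments(3,2,4)[OF dt_pos]
  note R = gauss.nn_integral_regression[OF measurable_targets_Pair2(1) _ regular_integrable(9)[OF assms] W dt_pos]
  note I = gauss.nn_integral_regression[OF measurable_targets_Pair2(2) _ regular_integrable(10)[OF assms] W dt_pos]
  show "(\<integral>\<^sup>+w. ennreal ((targetR y w - a - b * w)^2) \<partial>gauss dt)
      = ennreal (residualR y + (meanR y - a)^2 + dt * (covR y / dt - b)^2)"
    "(\<integral>\<^sup>+w. ennreal ((targetI y w - a - b * w)^2) \<partial>gauss dt)
      = ennreal (residualI y + (meanI y - a)^2 + dt * (covI y / dt - b)^2)"
    "0 \<le> residualR y" "0 \<le> residualI y"
    using R I by (simp_all add: residualR_def residualI_def meanR_def meanI_def covR_def covI_def)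
qed

text \<open>Intercepts and slopes (in \<open>\<delta>W\<^sub>t\<^sub>j\<close>) of the network part of \<open>F\<^sup>R\<close>, \<open>F\<^sup>I\<close>.\<close>
definition fitR :: "(real \<Rightarrow> complex) \<Rightarrow> real \<Rightarrow> real" where
  "fitR U y = Re (U y) + Im (f (real j * dt) y (U y)) * dt"

definition fitI :: "(real \<Rightarrow> complex) \<Rightarrow> real \<Rightarrow> real" where
  "fitI U y = Im (U y) - Re (f (real j * dt) y (U y)) * dt"

definition slopeR :: "(real \<Rightarrow> complex) \<Rightarrow> real \<Rightarrow> real" where
  "slopeR Z y = sqrt nu / 2 * (Re (Z y) - Im (Z y))"

definition slopeI :: "(real \<Rightarrow> complex) \<Rightarrow> real \<Rightarrow> real" where
  "slopeI Z y = sqrt nu / 2 * (Re (Z y) + Im (Z y))"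

definition errU :: "(real \<Rightarrow> complex) \<Rightarrow> real \<Rightarrow> real" where
  "errU U y = (meanR y - fitR U y)^2 + (meanI y - fitI U y)^2"

definition errZ :: "(real \<Rightarrow> complex) \<Rightarrow> real \<Rightarrow> real" where
  "errZ Z y = (covR y / dt - slopeR Z y)^2 + (covI y / dt - slopeI Z y)^2"

lemma measurable_errU [measurable]:
  assumes [measurable]: "U \<in> borel_measurable borel"
  shows "errU U \<in> borel_measurable borel"
  unfolding errU_def[abs_def] fitR_def fitI_def by measurable

lemma measurable_errZ [measurable]:
  assumes [measurable]: "Z \<in> borel_measurable borel"
  shows "errZ Z \<in> borel_measurable borel"
  unfolding errZ_def[abs_def] slopeR_def slopeI_def by measurable

lemma loss_eq_nn_integral_targets:
  assumes [measurable]: "U \<in> borel_measurable borel" "Z \<in> borel_measurable borel"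
  shows "loss nu dt f x j Up Zp U Z = (\<integral>\<^sup>+om. (\<integral>\<^sup>+w.
      ennreal ((targetR (Xp nu x j om) w - fitR U (Xp nu x j om) - slopeR Z (Xp nu x j om) * w)^2)
    + ennreal ((targetI (Xp nu x j om) w - fitI U (Xp nu x j om) - slopeI Z (Xp nu x j om) * w)^2)
      \<partial>gauss dt) \<partial>incr_space dt j)" (is "_ = ?rhs")
proof -
  have [measurable]: "Xp nu x j \<in> borel_measurable (incr_space dt (Suc j))"
    "Xp nu x (Suc j) \<in> borel_measurable (incr_space dt (Suc j))"
    "(\<lambda>om. om j) \<in> borel_measurable (incr_space dt (Suc j))"
    by (auto intro: measurable_Xp measurable_incr_component)
  define X where "X = Xp nu x j"
  define X1 where "X1 = Xp nu x (Suc j)"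
  define FR where "FR = (\<lambda>om. Re (U (X om))
      + sqrt nu / 2 * (Re (Zp (X1 om)) + Im (Zp (X1 om))) * om j
      + sqrt nu / 2 * (Re (Z (X om)) - Im (Z (X om))) * om j
      + Im (f (real j * dt) (X om) (U (X om))) * dt)"
  define FI where "FI = (\<lambda>om. Im (U (X om))
      - sqrt nu / 2 * (Re (Zp (X1 om)) - Im (Zp (X1 om))) * om j
      + sqrt nu / 2 * (Re (Z (X om)) + Im (Z (X om))) * om j
      - Re (f (real j * dt) (X om) (U (X om))) * dt)"
  have [measurable]: "X \<in> borel_measurable (incr_space dt (Suc j))"
    "X1 \<in> borel_measurable (incr_space dt (Suc j))"
    unfolding X_def X1_def by measurable
  have [measurable]: "FR \<in> borel_measurable (incr_space dt (Suc j))"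
    "FI \<in> borel_measurable (incr_space dt (Suc j))"
    unfolding FR_def FI_def by measurable
  have "loss nu dt f x j Up Zp U Z
      = (\<integral>\<^sup>+om. ennreal ((Re (Up (X1 om)) - FR om)^2) \<partial>incr_space dt (Suc j))
      + (\<integral>\<^sup>+om. ennreal ((Im (Up (X1 om)) - FI om)^2) \<partial>incr_space dt (Suc j))"
    unfolding loss_def Let_def X_def X1_def FR_def FI_def ..
  also have "\<dots> = (\<integral>\<^sup>+om. ennreal ((Re (Up (X1 om)) - FR om)^2)
      + ennreal ((Im (Up (X1 om)) - FI om)^2) \<partial>incr_space dt (Suc j))"
    by (rule nn_integral_add[symmetric]) measurable
  also have "\<dots> = (\<integral>\<^sup>+om. (\<integral>\<^sup>+w. ennreal ((Re (Up (X1 (om(j:=w)))) - FR (om(j:=w)))^2)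
      + ennreal ((Im (Up (X1 (om(j:=w)))) - FI (om(j:=w)))^2) \<partial>gauss dt) \<partial>incr_space dt j)"
    by (rule nn_integral_incr_space_Suc[OF dt_pos]) measurable
  also have "\<dots> = ?rhs"
    by (intro nn_integral_cong)
      (simp add: FR_def FI_def X_def X1_def Xp_fun_upd_same Xp_fun_upd_Suc targetR_def targetI_def
        fitR_def fitI_def slopeR_def slopeI_def algebra_simps)
  finally show ?thesis .
qed

lemma nn_integral_targets_eq:
  assumes "regular y"
  shows "(\<integral>\<^sup>+w. ennreal ((targetR y w - fitR U y - slopeR Z y * w)^2)
      + ennreal ((targetI y w - fitI U y - slopeI Z y * w)^2) \<partial>gauss dt)
    = ennreal (residualR y + residualI y) + ennreal (errU U y) + ennreal dt * ennreal (errZ Z y)"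
proof -
  note reg = nn_integral_target_regression[OF assms]
  have "(\<integral>\<^sup>+w. ennreal ((targetR y w - fitR U y - slopeR Z y * w)^2)
      + ennreal ((targetI y w - fitI U y - slopeI Z y * w)^2) \<partial>gauss dt)
    = ennreal (residualR y + (meanR y - fitR U y)^2 + dt * (covR y / dt - slopeR Z y)^2)
      + ennreal (residualI y + (meanI y - fitI U y)^2 + dt * (covI y / dt - slopeI Z y)^2)"
    by (subst nn_integral_add) (simp_all add: reg(1,2))
  also have "\<dots> = ennreal (residualR y + residualI y) + ennreal (errU U y) + ennreal dt * ennreal (errZ Z y)"
    using reg(3,4) dt_pos
    by (simp add: errU_def errZ_def ennreal_mult[symmetric] ennreal_plus[symmetric] del: ennreal_plus)
      (simp add: algebra_simps)
  finally show ?thesis .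
qed

lemma loss_decomposition:
  assumes [measurable]: "U \<in> borel_measurable borel" "Z \<in> borel_measurable borel"
  shows "loss nu dt f x j Up Zp U Z
    = (\<integral>\<^sup>+om. ennreal (residualR (Xp nu x j om) + residualI (Xp nu x j om)) \<partial>incr_space dt j)
      + (\<integral>\<^sup>+om. ennreal (errU U (Xp nu x j om)) \<partial>incr_space dt j)
      + ennreal dt * (\<integral>\<^sup>+om. ennreal (errZ Z (Xp nu x j om)) \<partial>incr_space dt j)"
    (is "_ = ?rhs")
proof -
  have "loss nu dt f x j Up Zp U Z = (\<integral>\<^sup>+om. ennreal (residualR (Xp nu x j om) + residualI (Xp nu x j om))
      + ennreal (errU U (Xp nu x j om)) + ennreal dt * ennreal (errZ Z (Xp nu x j om)) \<partial>incr_space dt j)"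
    unfolding loss_eq_nn_integral_targets[OF assms]
    using AE_regular by (intro nn_integral_cong_AE) (auto elim!: eventually_mono simp: nn_integral_targets_eq)
  also have "\<dots> = ?rhs"
    by (simp add: nn_integral_add nn_integral_cmult)
  finally show ?thesis .
qed

lemma targets_square_le:
  "(targetR y w)^2 + (targetI y w)^2
    \<le> 2 * (cmod (Up (y + sqrt nu * w)))^2 + nu * (cmod (Zp (y + sqrt nu * w)))^2 * w^2"
proof -
  let ?u1 = "Re (Up (y + sqrt nu * w))" and ?u2 = "Im (Up (y + sqrt nu * w))"
  let ?zr = "Re (Zp (y + sqrt nu * w))" and ?zi = "Im (Zp (y + sqrt nu * w))"
  have "(targetR y w)^2 \<le> 2 * ?u1^2 + 2 * (sqrt nu / 2 * (?zr + ?zi) * w)^2"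
    using square_add_le[of ?u1 "- (sqrt nu / 2 * (?zr + ?zi) * w)"] by (simp add: targetR_def)
  moreover have "(targetI y w)^2 \<le> 2 * ?u2^2 + 2 * (sqrt nu / 2 * (?zr - ?zi) * w)^2"
    using square_add_le by (simp add: targetI_def)
  moreover have "2 * (r / 2 * (a + b) * w)^2 + 2 * (r / 2 * (a - b) * w)^2 = r^2 * (a^2 + b^2) * w^2"
    for r a b :: real
    by (simp add: power2_eq_square field_simps)
  from this[of "sqrt nu" ?zr ?zi] have "2 * (sqrt nu / 2 * (?zr + ?zi) * w)^2
      + 2 * (sqrt nu / 2 * (?zr - ?zi) * w)^2 = nu * (?zr^2 + ?zi^2) * w^2"
    using nu_pos by simp
  ultimately show ?thesis by (simp add: cmod_power2)
qed

lemma fits_square_le: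
  "(fitR U y)^2 + (fitI U y)^2 \<le> (2 + 4 * dt^2 * L^2) * (cmod (U y))^2 + 4 * dt^2 * c0^2"
proof -
  let ?F = "f (real j * dt) y (U y)"
  have "(cmod ?F)^2 \<le> (c0 + L * cmod (U y))^2"
    using growth_f c0_nonneg L_pos by (intro power_mono) auto
  also have "\<dots> \<le> 2 * c0^2 + 2 * L^2 * (cmod (U y))^2"
    using square_add_le[of c0 "L * cmod (U y)"] by (simp add: power_mult_distrib)
  finally have F: "2 * dt^2 * (cmod ?F)^2 \<le> 2 * dt^2 * (2 * c0^2 + 2 * L^2 * (cmod (U y))^2)"
    by (rule mult_left_mono) simp
  have "(fitR U y)^2 \<le> 2 * (Re (U y))^2 + 2 * (Im ?F * dt)^2"
    unfolding fitR_def by (rule square_add_le)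
  moreover have "(fitI U y)^2 \<le> 2 * (Im (U y))^2 + 2 * (Re ?F * dt)^2"
    using square_add_le[of "Im (U y)" "- (Re ?F * dt)"] by (simp add: fitI_def)
  ultimately show ?thesis
    using F by (simp add: cmod_power2 power_mult_distrib algebra_simps)
qed

lemma slopes_square_eq:
  "(slopeR Z y * w)^2 + (slopeI Z y * w)^2 = nu / 2 * (cmod (Z y))^2 * w^2"
proof -
  have "(r / 2 * (a - b) * w)^2 + (r / 2 * (a + b) * w)^2 = r^2 / 2 * (a^2 + b^2) * w^2" for r a b :: real
    by (simp add: power2_eq_square field_simps)
  then show ?thesis
    using nu_pos unfolding slopeR_def slopeI_def cmod_power2 by simp
qed

lemma fit_error_le:
  "(targetR y w - fitR U y - slopeR Z y * w)^2 + (targetI y w - fitI U y - slopeI Z y * w)^2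
    \<le> 6 * (cmod (Up (y + sqrt nu * w)))^2 + 3 * nu * ((cmod (Zp (y + sqrt nu * w)))^2 * w^2)
      + 3 * ((2 + 4 * dt^2 * L^2) * (cmod (U y))^2 + 4 * dt^2 * c0^2)
      + 3 * nu * (cmod (Z y))^2 * w^2"
proof -
  have "(targetR y w - fitR U y - slopeR Z y * w)^2 + (targetI y w - fitI U y - slopeI Z y * w)^2
    \<le> 3 * ((targetR y w)^2 + (targetI y w)^2) + 3 * ((fitR U y)^2 + (fitI U y)^2)
      + 3 * ((slopeR Z y * w)^2 + (slopeI Z y * w)^2)"
    by (rule order_trans[OF add_mono[OF square_diff_diff_le square_diff_diff_le]])
      (simp add: algebra_simps)
  also have "\<dots> \<le> 3 * (2 * (cmod (Up (y + sqrt nu * w)))^2 + nu * (cmod (Zp (y + sqrt nu * w)))^2 * w^2)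
      + 3 * ((2 + 4 * dt^2 * L^2) * (cmod (U y))^2 + 4 * dt^2 * c0^2)
      + 3 * (nu / 2 * (cmod (Z y))^2 * w^2)"
    unfolding slopes_square_eq
    by (rule add_mono[OF add_mono[OF mult_left_mono[OF targets_square_le] mult_left_mono[OF fits_square_le]]
        order.refl]) simp_all
  also have "\<dots> \<le> 3 * (2 * (cmod (Up (y + sqrt nu * w)))^2 + nu * (cmod (Zp (y + sqrt nu * w)))^2 * w^2)
      + 3 * ((2 + 4 * dt^2 * L^2) * (cmod (U y))^2 + 4 * dt^2 * c0^2)
      + 3 * (nu * (cmod (Z y))^2 * w^2)"
    using nu_pos by (intro add_left_mono mult_left_mono mult_right_mono) auto
  finally show ?thesis by (simp add: algebra_simps)
qed

lemma nn_integral_fit_error_le: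
  "(\<integral>\<^sup>+w. ennreal ((targetR y w - fitR U y - slopeR Z y * w)^2)
      + ennreal ((targetI y w - fitI U y - slopeI Z y * w)^2) \<partial>gauss dt)
    \<le> 6 * (\<integral>\<^sup>+w. ennreal ((cmod (Up (y + sqrt nu * w)))^2) \<partial>gauss dt)
      + ennreal (3 * nu) * (\<integral>\<^sup>+w. ennreal ((cmod (Zp (y + sqrt nu * w)))^2 * w^2) \<partial>gauss dt)
      + ennreal (6 + 12 * dt^2 * L^2) * ennreal ((cmod (U y))^2) + ennreal (12 * dt^2 * c0^2)
      + ennreal (3 * nu * dt) * ennreal ((cmod (Z y))^2)" (is "_ \<le> ?rhs")
proof -
  let ?A = "\<lambda>w. (cmod (Up (y + sqrt nu * w)))^2" and ?B = "\<lambda>w. (cmod (Zp (y + sqrt nu * w)))^2 * w^2"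
  let ?C = "3 * ((2 + 4 * dt^2 * L^2) * (cmod (U y))^2 + 4 * dt^2 * c0^2)"
  let ?D = "3 * nu * (cmod (Z y))^2"
  have pw: "ennreal ((targetR y w - fitR U y - slopeR Z y * w)^2) + ennreal ((targetI y w - fitI U y - slopeI Z y * w)^2)
    \<le> 6 * ennreal (?A w) + ennreal (3 * nu) * ennreal (?B w) + ennreal ?C + ennreal ?D * ennreal (w^2)" for w
  proof -
    have "ennreal ((targetR y w - fitR U y - slopeR Z y * w)^2) + ennreal ((targetI y w - fitI U y - slopeI Z y * w)^2)
      \<le> ennreal (6 * ?A w + 3 * nu * ?B w + ?C + ?D * w^2)"
      using ennreal_leI[OF fit_error_le[of y w U Z]] by simp
    also have "\<dots> = 6 * ennreal (?A w) + ennreal (3 * nu) * ennreal (?B w) + ennreal ?C + ennreal ?D * ennreal (w^2)"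
      using nu_pos c0_nonneg by (simp add: ennreal_plus ennreal_mult)
    finally show ?thesis .
  qed
  have "(\<integral>\<^sup>+w. ennreal ((targetR y w - fitR U y - slopeR Z y * w)^2)
      + ennreal ((targetI y w - fitI U y - slopeI Z y * w)^2) \<partial>gauss dt)
    \<le> (\<integral>\<^sup>+w. 6 * ennreal (?A w) + ennreal (3 * nu) * ennreal (?B w) + ennreal ?C
      + ennreal ?D * ennreal (w^2) \<partial>gauss dt)"
    by (rule nn_integral_mono) (rule pw)
  also have "\<dots> = 6 * (\<integral>\<^sup>+w. ennreal (?A w) \<partial>gauss dt) + ennreal (3 * nu) * (\<integral>\<^sup>+w. ennreal (?B w) \<partial>gauss dt)
      + ennreal ?C + ennreal ?D * ennreal dt"
    by (simp add: nn_integral_add nn_integral_cmult nn_integral_gauss_square[OF dt_pos] gauss.emeasure_space_1[simplified])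
  also have "\<dots> = ?rhs"
  proof -
    have "ennreal ?C + ennreal ?D * ennreal dt = ennreal (6 + 12 * dt^2 * L^2) * ennreal ((cmod (U y))^2)
        + ennreal (12 * dt^2 * c0^2) + ennreal (3 * nu * dt) * ennreal ((cmod (Z y))^2)"
      using nu_pos dt_pos
      by (simp add: ennreal_mult[symmetric] ennreal_plus[symmetric] algebra_simps del: ennreal_plus)
    then show ?thesis by (simp only: add.assoc)
  qed
  finally show ?thesis .
qed

lemma loss_finite:
  assumes [measurable]: "U \<in> borel_measurable borel" "Z \<in> borel_measurable borel"
    and fin_U: "(\<integral>\<^sup>+om. ennreal ((cmod (U (Xp nu x j om)))^2) \<partial>incr_space dt j) < \<infinity>"
    and fin_Z: "(\<integral>\<^sup>+om. ennreal ((cmod (Z (Xp nu x j om)))^2) \<partial>incr_space dt j) < \<infinity>"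
  shows "loss nu dt f x j Up Zp U Z < \<infinity>"
proof -
  let ?X = "Xp nu x j"
  have [measurable]:
    "(\<lambda>om. \<integral>\<^sup>+w. ennreal ((cmod (Up (?X om + sqrt nu * w)))^2) \<partial>gauss dt) \<in> borel_measurable (incr_space dt j)"
    "(\<lambda>om. \<integral>\<^sup>+w. ennreal ((cmod (Zp (?X om + sqrt nu * w)))^2 * w^2) \<partial>gauss dt) \<in> borel_measurable (incr_space dt j)"
    by (rule measurable_nn_integral_Xp_step[OF dt_pos]; simp)+
  have "loss nu dt f x j Up Zp U Z \<le> (\<integral>\<^sup>+om.
      6 * (\<integral>\<^sup>+w. ennreal ((cmod (Up (?X om + sqrt nu * w)))^2) \<partial>gauss dt)
      + ennreal (3 * nu) * (\<integral>\<^sup>+w. ennreal ((cmod (Zp (?X om + sqrt nu * w)))^2 * w^2) \<partial>gauss dt)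
      + ennreal (6 + 12 * dt^2 * L^2) * ennreal ((cmod (U (?X om)))^2) + ennreal (12 * dt^2 * c0^2)
      + ennreal (3 * nu * dt) * ennreal ((cmod (Z (?X om)))^2) \<partial>incr_space dt j)"
    unfolding loss_eq_nn_integral_targets[OF assms(1,2)] by (intro nn_integral_mono nn_integral_fit_error_le)
  also have "\<dots> < \<infinity>"
    using nn_integral_step_moments_finite fin_U fin_Z nu_pos c0_nonneg
    by (simp add: nn_integral_add nn_integral_cmult ennreal_mult_less_top incr.emeasure_space_1)
  finally show ?thesis .
qed

lemma means_eq_condE:
  assumes "regular y"
  shows "meanR y = condE nu dt (\<lambda>z w. Re (Up z)) y
      - sqrt nu / 2 * condE nu dt (\<lambda>z w. (Re (Zp z) + Im (Zp z)) * w) y"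
    and "meanI y = condE nu dt (\<lambda>z w. Im (Up z)) y
      + sqrt nu / 2 * condE nu dt (\<lambda>z w. (Re (Zp z) - Im (Zp z)) * w) y"
proof -
  note int = regular_integrable[OF assms]
  have "integrable (gauss dt) (\<lambda>w. (Re (Zp (y + sqrt nu * w)) + Im (Zp (y + sqrt nu * w))) * w)"
    "integrable (gauss dt) (\<lambda>w. (Re (Zp (y + sqrt nu * w)) - Im (Zp (y + sqrt nu * w))) * w)"
    using Bochner_Integration.integrable_add[OF int(5,6)] Bochner_Integration.integrable_diff[OF int(5,6)]
    by (simp_all add: algebra_simps)
  then show "meanR y = condE nu dt (\<lambda>z w. Re (Up z)) y
      - sqrt nu / 2 * condE nu dt (\<lambda>z w. (Re (Zp z) + Im (Zp z)) * w) y"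
    "meanI y = condE nu dt (\<lambda>z w. Im (Up z)) y
      + sqrt nu / 2 * condE nu dt (\<lambda>z w. (Re (Zp z) - Im (Zp z)) * w) y"
    using int(1,2) by (simp_all add: meanR_def meanI_def targetR_def targetI_def condE_def mult.assoc)
qed

lemma covs_eq:
  assumes "regular y"
  shows "covR y = (\<integral>w. Re (Up (y + sqrt nu * w)) * w \<partial>gauss dt)
      - sqrt nu / 2 * ((\<integral>w. Re (Zp (y + sqrt nu * w)) * w^2 \<partial>gauss dt)
        + (\<integral>w. Im (Zp (y + sqrt nu * w)) * w^2 \<partial>gauss dt))"
    and "covI y = (\<integral>w. Im (Up (y + sqrt nu * w)) * w \<partial>gauss dt)
      + sqrt nu / 2 * ((\<integral>w. Re (Zp (y + sqrt nu * w)) * w^2 \<partial>gauss dt)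
        - (\<integral>w. Im (Zp (y + sqrt nu * w)) * w^2 \<partial>gauss dt))"
proof -
  note int = regular_integrable[OF assms(1)]
  let ?U = "\<lambda>w. Up (y + sqrt nu * w)" and ?Z = "\<lambda>w. Zp (y + sqrt nu * w)"
  have iZ: "integrable (gauss dt) (\<lambda>w. Re (?Z w) * w^2 + Im (?Z w) * w^2)"
    "integrable (gauss dt) (\<lambda>w. Re (?Z w) * w^2 - Im (?Z w) * w^2)"
    using int(7,8) by auto
  have "covR y = (\<integral>w. Re (?U w) * w - sqrt nu / 2 * (Re (?Z w) * w^2 + Im (?Z w) * w^2) \<partial>gauss dt)"
    unfolding covR_def targetR_def by (simp add: algebra_simps power2_eq_square)
  then show "covR y = (\<integral>w. Re (?U w) * w \<partial>gauss dt)
      - sqrt nu / 2 * ((\<integral>w. Re (?Z w) * w^2 \<partial>gauss dt) + (\<integral>w. Im (?Z w) * w^2 \<partial>gauss dt))"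
    using int(3) iZ(1) int(7,8) by (simp add: Bochner_Integration.integral_diff Bochner_Integration.integral_add)
  have "covI y = (\<integral>w. Im (?U w) * w + sqrt nu / 2 * (Re (?Z w) * w^2 - Im (?Z w) * w^2) \<partial>gauss dt)"
    unfolding covI_def targetI_def by (simp add: algebra_simps power2_eq_square)
  then show "covI y = (\<integral>w. Im (?U w) * w \<partial>gauss dt)
      + sqrt nu / 2 * ((\<integral>w. Re (?Z w) * w^2 \<partial>gauss dt) - (\<integral>w. Im (?Z w) * w^2 \<partial>gauss dt))"
    using int(4) iZ(2) int(7,8) by (simp add: Bochner_Integration.integral_diff Bochner_Integration.integral_add)
qed

lemma errU_eq:
  assumes "regular y"
    and vR: "Re v = condE nu dt (\<lambda>z w. Re (Up z)) y
      - sqrt nu / 2 * condE nu dt (\<lambda>z w. (Re (Zp z) + Im (Zp z)) * w) y - Im (f (real j * dt) y v) * dt"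
    and vI: "Im v = condE nu dt (\<lambda>z w. Im (Up z)) y
      + sqrt nu / 2 * condE nu dt (\<lambda>z w. (Re (Zp z) - Im (Zp z)) * w) y + Re (f (real j * dt) y v) * dt"
  shows "errU U y = (cmod ((v - U y) - \<i> * of_real dt * (f (real j * dt) y v - f (real j * dt) y (U y))))^2"
proof -
  have mR: "meanR y = Re v + Im (f (real j * dt) y v) * dt"
    and mI: "meanI y = Im v - Re (f (real j * dt) y v) * dt"
    using means_eq_condE[OF assms(1)] vR vI by linarith+
  show ?thesis
    unfolding errU_def fitR_def fitI_def mR mI cmod_power2 by (simp add: algebra_simps)
qed

lemma errZ_eq:
  assumes "regular y"
    and wR: "Re w = 1 / (dt * sqrt nu) * condE nu dt (\<lambda>z w. (Re (Up z) + Im (Up z)) * w) y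
      - 1 / dt * condE nu dt (\<lambda>z w. Im (Zp z) * w\<^sup>2) y"
    and wI: "Im w = 1 / (dt * sqrt nu) * condE nu dt (\<lambda>z w. (Im (Up z) - Re (Up z)) * w) y
      + 1 / dt * condE nu dt (\<lambda>z w. Re (Zp z) * w\<^sup>2) y"
  shows "errZ Z y = nu / 2 * (cmod (w - Z y))^2"
proof -
  note int = regular_integrable[OF assms(1)]
  define a3 where "a3 = (\<integral>w. Re (Up (y + sqrt nu * w)) * w \<partial>gauss dt)"
  define a4 where "a4 = (\<integral>w. Im (Up (y + sqrt nu * w)) * w \<partial>gauss dt)"
  define z7 where "z7 = (\<integral>w. Im (Zp (y + sqrt nu * w)) * w^2 \<partial>gauss dt)"
  define z8 where "z8 = (\<integral>w. Re (Zp (y + sqrt nu * w)) * w^2 \<partial>gauss dt)"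
  have "condE nu dt (\<lambda>z w. (Re (Up z) + Im (Up z)) * w) y = a3 + a4"
    "condE nu dt (\<lambda>z w. (Im (Up z) - Re (Up z)) * w) y = a4 - a3"
    using int(3,4) by (simp_all add: condE_def a3_def a4_def algebra_simps)
  then have "Re w = (a3 + a4) / (dt * sqrt nu) - z7 / dt" "Im w = (a4 - a3) / (dt * sqrt nu) + z8 / dt"
    using wR wI by (simp_all add: condE_def z7_def z8_def)
  moreover have "dt * sqrt nu * ((a3 + a4) / (dt * sqrt nu) - z7 / dt) = a3 + a4 - sqrt nu * z7"
    "dt * sqrt nu * ((a4 - a3) / (dt * sqrt nu) + z8 / dt) = a4 - a3 + sqrt nu * z8"
    using nu_pos dt_pos by (simp_all add: field_simps)
  ultimately have rw: "dt * sqrt nu * Re w = a3 + a4 - sqrt nu * z7"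
    "dt * sqrt nu * Im w = a4 - a3 + sqrt nu * z8"
    by simp_all
  have cov: "covR y = a3 - sqrt nu / 2 * (z8 + z7)" "covI y = a4 + sqrt nu / 2 * (z8 - z7)"
    using covs_eq[OF assms(1)] by (simp_all add: a3_def a4_def z7_def z8_def)
  have "covR y = (dt * sqrt nu * Re w - dt * sqrt nu * Im w) / 2"
    "covI y = (dt * sqrt nu * Re w + dt * sqrt nu * Im w) / 2"
    unfolding rw cov by (simp_all add: field_simps)
  then have n1: "covR y / dt = sqrt nu / 2 * (Re w - Im w)"
    and n2: "covI y / dt = sqrt nu / 2 * (Re w + Im w)"
    using dt_pos by (simp_all add: field_simps)
  have "(r/2 * (a - b) - r/2 * (c - d))^2 + (r/2 * (a + b) - r/2 * (c + d))^2
      = r^2 / 2 * ((a - c)^2 + (b - d)^2)" for r a b c d :: real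
    by (simp add: power2_eq_square field_simps)
  then show ?thesis
    unfolding errZ_def n1 n2 slopeR_def slopeI_def cmod_power2 using nu_pos by simp
qed

end

section \<open>Minimisers of the loss\<close>

locale scheme_step_minimizer = scheme_step +
  fixes PA :: "'p set" and PB :: "'q set"
    and Unet :: "real \<Rightarrow> 'p \<Rightarrow> complex" and Znet :: "real \<Rightarrow> 'q \<Rightarrow> complex"
    and \<xi> :: 'p and \<eta> :: 'q and vh wh :: "real \<Rightarrow> complex"
  assumes minimizer_in: "\<xi> \<in> PA" "\<eta> \<in> PB"
    and admissible_U: "\<And>p. p \<in> PA \<Longrightarrow> (\<lambda>y. Unet y p) \<in> borel_measurable borel
      \<and> EXp nu dt x j (\<lambda>y. (cmod (Unet y p))^2) < \<infinity>"
    and admissible_Z: "\<And>q. q \<in> PB \<Longrightarrow> (\<lambda>y. Znet y q) \<in> borel_measurable borel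
      \<and> EXp nu dt x j (\<lambda>y. (cmod (Znet y q))^2) < \<infinity>"
    and minimal: "\<And>p q. p \<in> PA \<Longrightarrow> q \<in> PB \<Longrightarrow>
      loss nu dt f x j Up Zp (\<lambda>y. Unet y \<xi>) (\<lambda>y. Znet y \<eta>) \<le> loss nu dt f x j Up Zp (\<lambda>y. Unet y p) (\<lambda>y. Znet y q)"
    and vh_re: "\<And>y. Re (vh y) = condE nu dt (\<lambda>z w. Re (Up z)) y
      - sqrt nu / 2 * condE nu dt (\<lambda>z w. (Re (Zp z) + Im (Zp z)) * w) y - Im (f (real j * dt) y (vh y)) * dt"
    and vh_im: "\<And>y. Im (vh y) = condE nu dt (\<lambda>z w. Im (Up z)) y
      + sqrt nu / 2 * condE nu dt (\<lambda>z w. (Re (Zp z) - Im (Zp z)) * w) y + Re (f (real j * dt) y (vh y)) * dt"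
    and wh_re: "\<And>y. Re (wh y) = 1 / (dt * sqrt nu) * condE nu dt (\<lambda>z w. (Re (Up z) + Im (Up z)) * w) y
      - 1 / dt * condE nu dt (\<lambda>z w. Im (Zp z) * w\<^sup>2) y"
    and wh_im: "\<And>y. Im (wh y) = 1 / (dt * sqrt nu) * condE nu dt (\<lambda>z w. (Im (Up z) - Re (Up z)) * w) y
      + 1 / dt * condE nu dt (\<lambda>z w. Re (Zp z) * w\<^sup>2) y"
begin

abbreviation "X \<equiv> Xp nu x j"

lemma measurable_networks [measurable]:
  "(\<lambda>y. Unet y \<xi>) \<in> borel_measurable borel" "(\<lambda>y. Znet y \<eta>) \<in> borel_measurable borel"
  using admissible_U[OF minimizer_in(1)] admissible_Z[OF minimizer_in(2)] by simp_all

text \<open>The residual variance does not depend on the networks, so by minimality the minimiser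
  also minimises each of the two remaining (finite) parts of the loss decomposition.\<close>
lemma nn_integral_err_minimal:
  assumes "p \<in> PA" "q \<in> PB"
  shows "(\<integral>\<^sup>+om. ennreal (errU (\<lambda>y. Unet y \<xi>) (X om)) \<partial>incr_space dt j)
      \<le> (\<integral>\<^sup>+om. ennreal (errU (\<lambda>y. Unet y p) (X om)) \<partial>incr_space dt j)"
    and "(\<integral>\<^sup>+om. ennreal (errZ (\<lambda>y. Znet y \<eta>) (X om)) \<partial>incr_space dt j)
      \<le> (\<integral>\<^sup>+om. ennreal (errZ (\<lambda>y. Znet y q) (X om)) \<partial>incr_space dt j)"
proof -
  let ?S = "\<integral>\<^sup>+om. ennreal (residualR (X om) + residualI (X om)) \<partial>incr_space dt j"
  let ?P = "\<lambda>U. \<integral>\<^sup>+om. ennreal (errU U (X om)) \<partial>incr_space dt j"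
  let ?Q = "\<lambda>Z. \<integral>\<^sup>+om. ennreal (errZ Z (X om)) \<partial>incr_space dt j"
  have [measurable]: "(\<lambda>y. Unet y p) \<in> borel_measurable borel" "(\<lambda>y. Znet y q) \<in> borel_measurable borel"
    using admissible_U[OF assms(1)] admissible_Z[OF assms(2)] by simp_all
  have "loss nu dt f x j Up Zp (\<lambda>y. Unet y \<xi>) (\<lambda>y. Znet y \<eta>) < \<infinity>"
    using admissible_U[OF minimizer_in(1)] admissible_Z[OF minimizer_in(2)]
    by (intro loss_finite) (simp_all add: EXp_def)
  then have fin: "?S \<noteq> \<infinity>" "?P (\<lambda>y. Unet y \<xi>) \<noteq> \<infinity>" "ennreal dt * ?Q (\<lambda>y. Znet y \<eta>) \<noteq> \<infinity>"
    unfolding loss_decomposition[OF measurable_networks] by auto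
  have "?S + ?P (\<lambda>y. Unet y \<xi>) + ennreal dt * ?Q (\<lambda>y. Znet y \<eta>) \<le> ?S + ?P (\<lambda>y. Unet y p) + ennreal dt * ?Q (\<lambda>y. Znet y \<eta>)"
    using minimal[OF assms(1) minimizer_in(2)] by (simp add: loss_decomposition)
  with fin show "?P (\<lambda>y. Unet y \<xi>) \<le> ?P (\<lambda>y. Unet y p)"
    by (simp add: ennreal_add_left_cancel_le add.commute[of _ "ennreal dt * _"] add.assoc)
  have "?S + ?P (\<lambda>y. Unet y \<xi>) + ennreal dt * ?Q (\<lambda>y. Znet y \<eta>) \<le> ?S + ?P (\<lambda>y. Unet y \<xi>) + ennreal dt * ?Q (\<lambda>y. Znet y q)"
    using minimal[OF minimizer_in(1) assms(2)] by (simp add: loss_decomposition)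
  with fin dt_pos show "?Q (\<lambda>y. Znet y \<eta>) \<le> ?Q (\<lambda>y. Znet y q)"
    by (simp add: ennreal_add_left_cancel_le add.assoc ennreal_mult_le_mult_iff)
qed

lemma errU_bounds:
  assumes "regular y"
  shows "(3/4)^2 * (cmod (vh y - U y))^2 \<le> errU U y"
    and "errU U y \<le> (5/4)^2 * (cmod (vh y - U y))^2"
  using norm_sub_perturbation_bounds[OF lipschitz_f less_imp_le[OF dt_pos] L_dt]
    errU_eq[OF assms vh_re vh_im] by simp_all

lemma error_U_le:
  assumes "p \<in> PA"
  shows "EXp nu dt x j (\<lambda>y. (cmod (vh y - Unet y \<xi>))^2) \<le> 3 * EXp nu dt x j (\<lambda>y. (cmod (vh y - Unet y p))^2)"
proof -
  let ?E = "\<lambda>p. \<integral>\<^sup>+om. ennreal ((cmod (vh (X om) - Unet (X om) p))^2) \<partial>incr_space dt j"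
  let ?P = "\<lambda>p. \<integral>\<^sup>+om. ennreal (errU (\<lambda>y. Unet y p) (X om)) \<partial>incr_space dt j"
  have [measurable]: "(\<lambda>y. Unet y p) \<in> borel_measurable borel" using admissible_U[OF assms] by simp
  have "?E \<xi> \<le> (\<integral>\<^sup>+om. ennreal (16/9) * ennreal (errU (\<lambda>y. Unet y \<xi>) (X om)) \<partial>incr_space dt j)"
    using AE_regular
  proof (intro nn_integral_mono_AE, eventually_elim)
    case (elim om)
    then have "(cmod (vh (X om) - Unet (X om) \<xi>))^2 \<le> 16/9 * errU (\<lambda>y. Unet y \<xi>) (X om)"
      using errU_bounds(1)[of "X om" "\<lambda>y. Unet y \<xi>"] by (simp add: field_simps)
    moreover have "0 \<le> errU (\<lambda>y. Unet y \<xi>) (X om)" by (simp add: errU_def)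
    ultimately show ?case by (simp add: ennreal_mult[symmetric] ennreal_leI)
  qed
  also have "\<dots> = ennreal (16/9) * ?P \<xi>"
    by (rule nn_integral_cmult) measurable
  also have "\<dots> \<le> ennreal (16/9) * ?P p"
    using nn_integral_err_minimal(1)[OF assms minimizer_in(2)] by (rule mult_left_mono) simp
  also have "?P p \<le> (\<integral>\<^sup>+om. ennreal (25/16) * ennreal ((cmod (vh (X om) - Unet (X om) p))^2) \<partial>incr_space dt j)"
    using AE_regular
  proof (intro nn_integral_mono_AE, eventually_elim)
    case (elim om)
    then have "errU (\<lambda>y. Unet y p) (X om) \<le> 25/16 * (cmod (vh (X om) - Unet (X om) p))^2"
      using errU_bounds(2)[of "X om" "\<lambda>y. Unet y p"] by (simp add: field_simps)
    then show ?case by (simp add: ennreal_mult[symmetric] ennreal_leI)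
  qed
  also have "\<dots> = ennreal (25/16) * ?E p"
    by (rule nn_integral_cmult_pos) simp
  finally have "?E \<xi> \<le> ennreal (16/9) * (ennreal (25/16) * ?E p)"
    by (simp add: mult_left_mono)
  also have "\<dots> = ennreal (25/9) * ?E p"
    by (simp add: mult.assoc[symmetric] ennreal_mult[symmetric])
  also have "\<dots> \<le> ennreal 3 * ?E p"
    by (intro mult_right_mono ennreal_leI) simp_all
  finally show ?thesis by (simp add: EXp_def)
qed

lemma error_Z_le:
  assumes "q \<in> PB"
  shows "EXp nu dt x j (\<lambda>y. (cmod (wh y - Znet y \<eta>))^2) \<le> EXp nu dt x j (\<lambda>y. (cmod (wh y - Znet y q))^2)"
proof -
  have errZ: "(\<integral>\<^sup>+om. ennreal (errZ Z (X om)) \<partial>incr_space dt j)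
      = ennreal (nu / 2) * EXp nu dt x j (\<lambda>y. (cmod (wh y - Z y))^2)" for Z
  proof -
    have "(\<integral>\<^sup>+om. ennreal (errZ Z (X om)) \<partial>incr_space dt j)
        = (\<integral>\<^sup>+om. ennreal (nu / 2) * ennreal ((cmod (wh (X om) - Z (X om)))^2) \<partial>incr_space dt j)"
      using AE_regular
      by (intro nn_integral_cong_AE, eventually_elim)
        (simp add: errZ_eq[OF _ wh_re wh_im] ennreal_mult'[symmetric] less_imp_le[OF nu_pos])
    also have "\<dots> = ennreal (nu / 2) * EXp nu dt x j (\<lambda>y. (cmod (wh y - Z y))^2)"
      unfolding EXp_def by (rule nn_integral_cmult_pos) (simp add: nu_pos)
    finally show ?thesis .
  qed
  show ?thesis
    using nn_integral_err_minimal(2)[OF minimizer_in(1) assms] nu_pos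
    unfolding errZ by (simp add: ennreal_mult_le_mult_iff)
qed

lemma errors_le_INF:
  "EXp nu dt x j (\<lambda>y. (cmod (vh y - Unet y \<xi>))^2) \<le> 3 * (INF p\<in>PA. EXp nu dt x j (\<lambda>y. (cmod (vh y - Unet y p))^2))"
  "EXp nu dt x j (\<lambda>y. (cmod (wh y - Znet y \<eta>))^2) \<le> (INF q\<in>PB. EXp nu dt x j (\<lambda>y. (cmod (wh y - Znet y q))^2))"
  using ennreal_le_mult_INF[where c=3 and I=PA and g="\<lambda>p. EXp nu dt x j (\<lambda>y. (cmod (vh y - Unet y p))^2)"]
    error_U_le
  by (auto intro: INF_greatest error_Z_le)

end

lemma terminal_gradient_square_integrable:
  fixes ux :: "real \<Rightarrow> real \<Rightarrow> complex"
  assumes "0 \<le> T" and u_deriv: "\<And>y. ((\<lambda>y. u T y) has_vector_derivative ux T y) (at y)"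
    and cont: "continuous_on ({0..T} \<times> UNIV) (\<lambda>(t, x). ux t x)"
    and L2: "(\<integral>\<^sup>+y. ennreal ((cmod (ux T y))^2) \<partial>lborel) < ennreal (K^2)"
    and uG: "\<And>y. u T y = G y" and G_deriv: "\<And>y. (G has_vector_derivative Gp y) (at y)"
  shows "Gp \<in> borel_measurable borel" "(\<integral>\<^sup>+y. ennreal ((cmod (Gp y))^2) \<partial>lborel) < \<infinity>"
proof -
  have Gp: "Gp = ux T"
  proof
    fix y
    have "(G has_vector_derivative ux T y) (at y)"
      using u_deriv[of y] uG by (simp add: fun_eq_iff[symmetric] ext)
    then show "Gp y = ux T y" using G_deriv vector_derivative_unique_at by blast
  qed
  have "continuous_on UNIV (\<lambda>y. (\<lambda>(t, x). ux t x) (T, y))"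
    by (rule continuous_on_compose2[OF cont]) (use assms(1) in \<open>auto intro!: continuous_intros\<close>)
  then show "Gp \<in> borel_measurable borel"
    unfolding Gp by (intro borel_measurable_continuous_onI) simp
  show "(\<integral>\<^sup>+y. ennreal ((cmod (Gp y))^2) \<partial>lborel) < \<infinity>"
    unfolding Gp by (rule order.strict_trans[OF L2]) simp
qed

lemma continuous_on_uncurry_lipschitz:
  fixes F :: "real \<Rightarrow> complex \<Rightarrow> complex"
  assumes lip: "\<And>y z z'. cmod (F y z - F y z') \<le> L * cmod (z - z')"
    and lipx: "\<And>y y' z. cmod (F y z - F y' z) \<le> L * \<bar>y - y'\<bar> * cmod z"
    and L: "0 \<le> L"
  shows "continuous_on UNIV (\<lambda>p. F (fst p) (snd p))"
proof (rule continuous_at_imp_continuous_on, intro ballI)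
  fix p0 :: "real \<times> complex"
  obtain y0 z0 where p0: "p0 = (y0, z0)" by (cases p0)
  show "isCont (\<lambda>p. F (fst p) (snd p)) p0"
    unfolding continuous_at_eps_delta
  proof (intro allI impI)
    fix e :: real assume e: "0 < e"
    define K where "K = L * (cmod z0 + 1) + L"
    have K: "0 \<le> K" unfolding K_def using L by simp
    define d where "d = min 1 (e / (K + 1))"
    have d: "0 < d" "d \<le> 1" "d \<le> e / (K + 1)" unfolding d_def using e K by auto
    have close: "dist (F y z) (F y0 z0) < e" if "dist (y, z) p0 < d" for y :: real and z :: complex
    proof -
      have dy: "\<bar>y - y0\<bar> \<le> d" and dz: "cmod (z - z0) \<le> d"
        using dist_fst_le[of "(y, z)" p0] dist_snd_le[of "(y, z)" p0] that
        unfolding p0 by (simp_all add: dist_real_def dist_norm)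
      have zb: "cmod z \<le> cmod z0 + 1" using dz d(2) norm_triangle_ineq2[of z z0] by linarith
      have "cmod (F y z - F y0 z0) \<le> cmod (F y z - F y0 z) + cmod (F y0 z - F y0 z0)"
        using norm_triangle_ineq[of "F y z - F y0 z" "F y0 z - F y0 z0"] by simp
      also have "\<dots> \<le> L * \<bar>y - y0\<bar> * cmod z + L * cmod (z - z0)"
        using lipx lip by (intro add_mono) auto
      also have "\<dots> \<le> L * d * (cmod z0 + 1) + L * d"
        using dy dz zb L by (intro add_mono mult_mono mult_left_mono) auto
      also have "\<dots> = d * K" unfolding K_def by (simp add: algebra_simps)
      also have "\<dots> \<le> e / (K + 1) * K" using d(3) K by (rule mult_right_mono)
      also have "\<dots> < e" using e K by (simp add: field_simps)
      finally show ?thesis by (simp add: dist_norm)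
    qed
    show "\<exists>d>0. \<forall>p. dist p p0 < d \<longrightarrow> dist (F (fst p) (snd p)) (F (fst p0) (snd p0)) < e"
    proof (intro exI[of _ d] conjI allI impI)
      fix p :: "real \<times> complex" assume "dist p p0 < d"
      then show "dist (F (fst p) (snd p)) (F (fst p0) (snd p0)) < e"
        using close[of "fst p" "snd p"] unfolding p0 by simp
    qed (rule d(1))
  qed
qed

lemma nonlinearity_at_time:
  fixes F :: "real \<Rightarrow> complex \<Rightarrow> complex"
  assumes lip: "\<And>y z z'. cmod (F y z - F y z') \<le> L * cmod (z - z')"
    and lipx: "\<And>y y' z. cmod (F y z - F y' z) \<le> L * \<bar>y - y'\<bar> * cmod z"
    and L: "0 \<le> L"
  shows "(\<lambda>(y, z). F y z) \<in> borel_measurable (borel \<Otimes>\<^sub>M borel)"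
    and "cmod (F y z) \<le> cmod (F 0 0) + L * cmod z"
proof -
  have "(\<lambda>p. F (fst p) (snd p)) \<in> borel_measurable borel"
    by (rule borel_measurable_continuous_onI[OF continuous_on_uncurry_lipschitz[OF assms]])
  then show "(\<lambda>(y, z). F y z) \<in> borel_measurable (borel \<Otimes>\<^sub>M borel)"
    by (simp add: borel_prod case_prod_beta')
  have "F y 0 = F 0 0" using lipx[of y 0 0] by simp
  then show "cmod (F y z) \<le> cmod (F 0 0) + L * cmod z"
    using norm_triangle_ineq[of "F y 0" "F y z - F y 0"] lip[of y z 0] by simp
qed

lemma next_step_admissible:
  fixes x :: real
  assumes dt: "0 < dt" and nu: "0 < nu" and j: "j < M"
    and G_bound: "\<And>y. cmod (G y) \<le> B" and [measurable]: "G \<in> borel_measurable borel"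
    and [measurable]: "Gp \<in> borel_measurable borel"
    and Gp_L2: "(\<integral>\<^sup>+y. ennreal ((cmod (Gp y))^2) \<partial>lborel) < \<infinity>"
    and hU: "\<forall>j<M. \<forall>\<xi>\<in>params Na. (\<lambda>y. Unet j y \<xi>) \<in> borel_measurable borel \<and>
        (\<forall>x. EXp nu dt x j (\<lambda>y. (cmod (Unet j y \<xi>))\<^sup>2) < \<infinity>)"
    and hZ: "\<forall>j<M. \<forall>\<eta>\<in>params Nb. (\<lambda>y. Znet j y \<eta>) \<in> borel_measurable borel \<and>
        (\<forall>x. EXp nu dt x j (\<lambda>y. (cmod (Znet j y \<eta>))\<^sup>2) < \<infinity>)"
    and hparams: "\<And>j x. j < M \<Longrightarrow> xi j x \<in> params Na \<and> eta j x \<in> params Nb"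
  defines "Up \<equiv> hatN M G Unet xi (Suc j) x" and "Zp \<equiv> hatN M Gp Znet eta (Suc j) x"
  shows "Up \<in> borel_measurable borel \<and> Zp \<in> borel_measurable borel
    \<and> (\<integral>\<^sup>+om. ennreal ((cmod (Up (Xp nu x (Suc j) om)))^2) \<partial>incr_space dt (Suc j)) < \<infinity>
    \<and> (\<integral>\<^sup>+om. ennreal ((cmod (Zp (Xp nu x (Suc j) om)))^2 * (om j)^2) \<partial>incr_space dt (Suc j)) < \<infinity>"
proof (cases "Suc j = M")
  case True
  then have "Up = G" "Zp = Gp" by (simp_all add: Up_def Zp_def hatN_def fun_eq_iff)
  then show ?thesis
    using moment_finite_of_bounded[OF dt G_bound] moment_incr_square_finite[OF dt nu _ disjI1[OF Gp_L2]]
    by simp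
next
  case False
  then have sj: "Suc j < M" using j by simp
  then have "Up = (\<lambda>y. Unet (Suc j) y (xi (Suc j) x))" "Zp = (\<lambda>y. Znet (Suc j) y (eta (Suc j) x))"
    by (simp_all add: Up_def Zp_def hatN_def fun_eq_iff)
  moreover have "(\<lambda>y. Unet (Suc j) y (xi (Suc j) x)) \<in> borel_measurable borel
      \<and> (\<forall>x'. EXp nu dt x' (Suc j) (\<lambda>y. (cmod (Unet (Suc j) y (xi (Suc j) x)))\<^sup>2) < \<infinity>)"
    "(\<lambda>y. Znet (Suc j) y (eta (Suc j) x)) \<in> borel_measurable borel
      \<and> (\<forall>x'. EXp nu dt x' (Suc j) (\<lambda>y. (cmod (Znet (Suc j) y (eta (Suc j) x)))\<^sup>2) < \<infinity>)"
    using hU hZ hparams[OF sj] sj by blast+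
  ultimately show ?thesis
    using moment_incr_square_finite[OF dt nu, where Z="\<lambda>y. Znet (Suc j) y (eta (Suc j) x)" and x=x and j=j]
    by (simp add: EXp_def)
qed

lemma nn_integral_error_bound:
  assumes "\<And>x. a x \<le> 3 * Iv x" "\<And>x. b x \<le> Iw x"
    and [measurable]: "Iv \<in> borel_measurable M" "Iw \<in> borel_measurable M"
    and "0 < nu" "0 < dt"
  shows "(\<integral>\<^sup>+x. a x \<partial>M) + ennreal (nu * dt / 2) * (\<integral>\<^sup>+x. b x \<partial>M)
    \<le> ennreal (max 3 (nu / 2)) * ((\<integral>\<^sup>+x. Iv x \<partial>M) + ennreal dt * (\<integral>\<^sup>+x. Iw x \<partial>M))"
proof -
  let ?C = "max 3 (nu / 2)"
  have "a x + ennreal (nu * dt / 2) * b x \<le> ennreal ?C * Iv x + ennreal ?C * (ennreal dt * Iw x)" for x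
  proof (rule add_mono)
    have "a x \<le> ennreal 3 * Iv x" using assms(1) by simp
    also have "\<dots> \<le> ennreal ?C * Iv x" by (intro mult_right_mono ennreal_leI) auto
    finally show "a x \<le> ennreal ?C * Iv x" .
    have "ennreal (nu * dt / 2) * b x \<le> ennreal (nu / 2) * (ennreal dt * Iw x)"
      using assms(2,5,6) by (simp add: mult.assoc[symmetric] ennreal_mult[symmetric] mult_left_mono)
    also have "\<dots> \<le> ennreal ?C * (ennreal dt * Iw x)" by (intro mult_right_mono ennreal_leI) auto
    finally show "ennreal (nu * dt / 2) * b x \<le> ennreal ?C * (ennreal dt * Iw x)" .
  qed
  note pw = this
  have "(\<integral>\<^sup>+x. a x \<partial>M) + ennreal (nu * dt / 2) * (\<integral>\<^sup>+x. b x \<partial>M)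
      \<le> (\<integral>\<^sup>+x. a x + ennreal (nu * dt / 2) * b x \<partial>M)"
    by (rule order_trans[OF add_left_mono[OF nn_integral_cmult_le] nn_integral_add_le])
  also have "\<dots> \<le> (\<integral>\<^sup>+x. ennreal ?C * Iv x + ennreal ?C * (ennreal dt * Iw x) \<partial>M)"
    by (rule nn_integral_mono) (rule pw)
  also have "\<dots> = ennreal ?C * ((\<integral>\<^sup>+x. Iv x \<partial>M) + ennreal dt * (\<integral>\<^sup>+x. Iw x \<partial>M))"
    by (simp add: nn_integral_add nn_integral_cmult distrib_left)
  finally show ?thesis .
qed

lemma error_bound:
  fixes L nu T dt :: real and M j :: nat and \<rho> :: "real \<Rightarrow> real"
    and f :: "real \<Rightarrow> real \<Rightarrow> complex \<Rightarrow> complex"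
    and u ut ux uxx uxxx uxxxx utx utxx :: "real \<Rightarrow> real \<Rightarrow> complex"
    and G Gp :: "real \<Rightarrow> complex" and Na Nb :: nat
    and Unet Znet :: "nat \<Rightarrow> real \<Rightarrow> (nat \<Rightarrow> real) \<Rightarrow> complex"
    and xi eta :: "nat \<Rightarrow> real \<Rightarrow> (nat \<Rightarrow> real)"
    and vhat what :: "nat \<Rightarrow> real \<Rightarrow> real \<Rightarrow> complex"
  assumes L: "0 < L" and nu: "0 < nu" and dt_def: "dt = T / real M"
    and T: "0 < T" and M: "0 < M" and dt_small: "dt \<le> 1 / (4 * L)" and \<rho>0: "\<rho> 0 = 0"
    and hlip: "\<forall>t\<in>{0..T}. \<forall>x y y'. cmod (f t x y - f t x y') \<le> L * cmod (y - y')"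
    and hlipx: "\<forall>t\<in>{0..T}. \<forall>t'\<in>{0..T}. \<forall>x x'. \<forall>\<phi>::real \<Rightarrow> complex. continuous_on UNIV \<phi> \<longrightarrow>
        cmod (f t x (\<phi> x) - f t' x' (\<phi> x)) \<le> L * (sqrt (\<rho> \<bar>t - t'\<bar>) + \<bar>x - x'\<bar>) * cmod (\<phi> x)"
    and hB: "\<exists>B. \<forall>t\<in>{0..T}. \<forall>x. cmod (u t x) \<le> B"
    and hder: "\<forall>t\<in>{0..T}. \<forall>x.
        ((\<lambda>s. u s x) has_vector_derivative ut t x) (at t within {0..T}) \<and>
        ((\<lambda>y. u t y) has_vector_derivative ux t x) (at x) \<and>
        ((\<lambda>y. ux t y) has_vector_derivative uxx t x) (at x) \<and>
        ((\<lambda>y. uxx t y) has_vector_derivative uxxx t x) (at x) \<and>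
        ((\<lambda>y. uxxx t y) has_vector_derivative uxxxx t x) (at x) \<and>
        ((\<lambda>s. ux s x) has_vector_derivative utx t x) (at t within {0..T}) \<and>
        ((\<lambda>s. uxx s x) has_vector_derivative utxx t x) (at t within {0..T})"
    and hreg: "\<forall>g\<in>{ut, ux, uxx, uxxx, uxxxx, utx, utxx}.
        continuous_on ({0..T} \<times> UNIV) (\<lambda>(t, x). g t x) \<and>
        (\<forall>t\<in>{0..T}. (\<integral>\<^sup>+ x. ennreal ((cmod (g t x))\<^sup>2) \<partial>lborel) < ennreal (K\<^sup>2))"
    and hTG: "\<forall>x. u T x = G x" and hG: "\<forall>x. (G has_vector_derivative Gp x) (at x)"
    and hU: "\<forall>j<M. \<forall>\<xi>\<in>params Na. (\<lambda>y. Unet j y \<xi>) \<in> borel_measurable borel \<and>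
        (\<forall>x. EXp nu dt x j (\<lambda>y. (cmod (Unet j y \<xi>))\<^sup>2) < \<infinity>)"
    and hZ: "\<forall>j<M. \<forall>\<eta>\<in>params Nb. (\<lambda>y. Znet j y \<eta>) \<in> borel_measurable borel \<and>
        (\<forall>x. EXp nu dt x j (\<lambda>y. (cmod (Znet j y \<eta>))\<^sup>2) < \<infinity>)"
    and halg: "\<forall>j<M. \<forall>x. xi j x \<in> params Na \<and> eta j x \<in> params Nb \<and>
        (\<forall>\<xi>\<in>params Na. \<forall>\<eta>\<in>params Nb.
           loss nu dt f x j (hatN M G Unet xi (Suc j) x) (hatN M Gp Znet eta (Suc j) x)
                (\<lambda>y. Unet j y (xi j x)) (\<lambda>y. Znet j y (eta j x))
         \<le> loss nu dt f x j (hatN M G Unet xi (Suc j) x) (hatN M Gp Znet eta (Suc j) x)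
                (\<lambda>y. Unet j y \<xi>) (\<lambda>y. Znet j y \<eta>))"
    and haux: "\<forall>j<M. \<forall>x y.
        Re (vhat j x y) = condE nu dt (\<lambda>z w. Re (hatN M G Unet xi (Suc j) x z)) y
           - sqrt nu / 2 * condE nu dt (\<lambda>z w. (Re (hatN M Gp Znet eta (Suc j) x z)
               + Im (hatN M Gp Znet eta (Suc j) x z)) * w) y
           - Im (f (real j * dt) y (vhat j x y)) * dt \<and>
        Im (vhat j x y) = condE nu dt (\<lambda>z w. Im (hatN M G Unet xi (Suc j) x z)) y
           + sqrt nu / 2 * condE nu dt (\<lambda>z w. (Re (hatN M Gp Znet eta (Suc j) x z)
               - Im (hatN M Gp Znet eta (Suc j) x z)) * w) y
           + Re (f (real j * dt) y (vhat j x y)) * dt \<and>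
        Re (what j x y) = 1 / (dt * sqrt nu)
             * condE nu dt (\<lambda>z w. (Re (hatN M G Unet xi (Suc j) x z) + Im (hatN M G Unet xi (Suc j) x z)) * w) y
           - 1 / dt * condE nu dt (\<lambda>z w. Im (hatN M Gp Znet eta (Suc j) x z) * w\<^sup>2) y \<and>
        Im (what j x y) = 1 / (dt * sqrt nu)
             * condE nu dt (\<lambda>z w. (Im (hatN M G Unet xi (Suc j) x z) - Re (hatN M G Unet xi (Suc j) x z)) * w) y
           + 1 / dt * condE nu dt (\<lambda>z w. Re (hatN M Gp Znet eta (Suc j) x z) * w\<^sup>2) y"
    and hinf: "\<forall>j<M. (\<lambda>x. INF \<xi>\<in>params Na. EXp nu dt x j (\<lambda>y. (cmod (vhat j x y - Unet j y \<xi>))\<^sup>2))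
               \<in> borel_measurable lborel \<and>
            (\<lambda>x. INF \<eta>\<in>params Nb. EXp nu dt x j (\<lambda>y. (cmod (what j x y - Znet j y \<eta>))\<^sup>2))
               \<in> borel_measurable lborel"
    and j: "j < M"
  shows "(\<integral>\<^sup>+ x. EXp nu dt x j (\<lambda>y. (cmod (vhat j x y - Unet j y (xi j x)))\<^sup>2) \<partial>lborel)
        + ennreal (nu * dt / 2)
          * (\<integral>\<^sup>+ x. EXp nu dt x j (\<lambda>y. (cmod (what j x y - Znet j y (eta j x)))\<^sup>2) \<partial>lborel)
        \<le> ennreal (max 3 (nu / 2)) *
          ((\<integral>\<^sup>+ x. (INF \<xi>\<in>params Na. EXp nu dt x j (\<lambda>y. (cmod (vhat j x y - Unet j y \<xi>))\<^sup>2)) \<partial>lborel)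
           + ennreal dt *
             (\<integral>\<^sup>+ x. (INF \<eta>\<in>params Nb. EXp nu dt x j (\<lambda>y. (cmod (what j x y - Znet j y \<eta>))\<^sup>2)) \<partial>lborel))"
proof -
  have dt: "0 < dt" using T M by (simp add: dt_def)
  have L_dt: "L * dt \<le> 1/4" using dt_small L by (simp add: field_simps)
  have tj: "real j * dt \<in> {0..T}"
  proof -
    have "real j * dt \<le> real M * dt" using j dt by (intro mult_right_mono) auto
    also have "\<dots> = T" using M by (simp add: dt_def)
    finally show ?thesis using dt by simp
  qed
  have lip: "cmod (f (real j * dt) y z - f (real j * dt) y z') \<le> L * cmod (z - z')" for y z z'
    using hlip tj by blast
  have "cmod (f (real j * dt) y z - f (real j * dt) y' z) \<le> L * \<bar>y - y'\<bar> * cmod z" for y y' z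
    using hlipx[rule_format, OF tj tj, of "\<lambda>_. z" y y'] \<rho>0 by simp
  note f_step = nonlinearity_at_time[OF lip this less_imp_le[OF L]]
  have T0: "T \<in> {0..T}" using T by simp
  obtain B where "\<forall>t\<in>{0..T}. \<forall>x. cmod (u t x) \<le> B" using hB by blast
  then have G_bound: "cmod (G y) \<le> B" for y using hTG T0 by metis
  have "((\<lambda>y. u T y) has_vector_derivative ux T y) (at y)" for y using hder T0 by blast
  moreover have "continuous_on ({0..T} \<times> UNIV) (\<lambda>(t, x). ux t x)"
    "(\<integral>\<^sup>+y. ennreal ((cmod (ux T y))^2) \<partial>lborel) < ennreal (K^2)"
    using hreg T0 by blast+
  ultimately have Gp: "Gp \<in> borel_measurable borel" "(\<integral>\<^sup>+y. ennreal ((cmod (Gp y))^2) \<partial>lborel) < \<infinity>"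
    using terminal_gradient_square_integrable[of T u ux K G Gp] hTG hG T by auto
  have "G \<in> borel_measurable borel"
    using hG by (intro borel_measurable_continuous_onI continuous_at_imp_continuous_on)
      (blast intro: has_vector_derivative_continuous)
  note next_step = next_step_admissible[OF dt nu j G_bound this Gp hU hZ, of xi eta]
  have "scheme_step_minimizer nu dt L (cmod (f (real j * dt) 0 0)) j x
      (hatN M G Unet xi (Suc j) x) (hatN M Gp Znet eta (Suc j) x) f (params Na) (params Nb)
      (Unet j) (Znet j) (xi j x) (eta j x) (vhat j x) (what j x)" for x
    using nu dt L L_dt lip f_step next_step[of x] halg haux hU hZ j
    by unfold_locales (auto simp: EXp_def)
  note errors = scheme_step_minimizer.errors_le_INF[OF this]
  show ?thesis
    using hinf j by (intro nn_integral_error_bound nu dt errors) auto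
qed

theorem lemma4p2:
  fixes L nu :: real
  assumes "0 < L" and "0 < nu"
  shows "\<exists>C>0. \<exists>\<delta>0>0. \<forall>(T::real) (K::real) (M::nat) (\<rho>::real \<Rightarrow> real)
      (f::real \<Rightarrow> real \<Rightarrow> complex \<Rightarrow> complex)
      (u::real \<Rightarrow> real \<Rightarrow> complex) (ut::real \<Rightarrow> real \<Rightarrow> complex) (ux::real \<Rightarrow> real \<Rightarrow> complex)
      (uxx::real \<Rightarrow> real \<Rightarrow> complex) (uxxx::real \<Rightarrow> real \<Rightarrow> complex)
      (uxxxx::real \<Rightarrow> real \<Rightarrow> complex) (utx::real \<Rightarrow> real \<Rightarrow> complex)
      (utxx::real \<Rightarrow> real \<Rightarrow> complex)
      (G::real \<Rightarrow> complex) (Gp::real \<Rightarrow> complex) (Na::nat) (Nb::nat)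
      (Unet::nat \<Rightarrow> real \<Rightarrow> (nat \<Rightarrow> real) \<Rightarrow> complex)
      (Znet::nat \<Rightarrow> real \<Rightarrow> (nat \<Rightarrow> real) \<Rightarrow> complex)
      (xi::nat \<Rightarrow> real \<Rightarrow> (nat \<Rightarrow> real)) (eta::nat \<Rightarrow> real \<Rightarrow> (nat \<Rightarrow> real))
      (vhat::nat \<Rightarrow> real \<Rightarrow> real \<Rightarrow> complex) (what::nat \<Rightarrow> real \<Rightarrow> real \<Rightarrow> complex).
    (let dt = T / real M;
         Uh = hatN M G Unet xi;
         Zh = hatN M Gp Znet eta
     in
     \<comment> \<open>time grid, delta t sufficiently small\<close>
     0 < T \<longrightarrow> 0 < K \<longrightarrow> 0 < M \<longrightarrow> dt \<le> \<delta>0 \<longrightarrow>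
     \<comment> \<open>modulus rho\<close>
     continuous_on {0..} \<rho> \<longrightarrow> mono_on {0..} \<rho> \<longrightarrow> \<rho> 0 = 0 \<longrightarrow> (\<forall>s\<ge>0. 0 \<le> \<rho> s) \<longrightarrow>
     \<comment> \<open>assumption (iii)\<close>
     (\<forall>t\<in>{0..T}. \<forall>x y y'. cmod (f t x y - f t x y') \<le> L * cmod (y - y')) \<longrightarrow>
     (\<forall>t\<in>{0..T}. \<forall>t'\<in>{0..T}. \<forall>x x'. \<forall>\<phi>::real \<Rightarrow> complex. continuous_on UNIV \<phi> \<longrightarrow>
        cmod (f t x (\<phi> x) - f t' x' (\<phi> x))
          \<le> L * (sqrt (\<rho> \<bar>t - t'\<bar>) + \<bar>x - x'\<bar>) * cmod (\<phi> x)) \<longrightarrow>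
     \<comment> \<open>assumption (i): u bounded solution with the stated continuous derivatives\<close>
     (\<exists>B. \<forall>t\<in>{0..T}. \<forall>x. cmod (u t x) \<le> B) \<longrightarrow>
     (\<forall>t\<in>{0..T}. \<forall>x.
        ((\<lambda>s. u s x) has_vector_derivative ut t x) (at t within {0..T}) \<and>
        ((\<lambda>y. u t y) has_vector_derivative ux t x) (at x) \<and>
        ((\<lambda>y. ux t y) has_vector_derivative uxx t x) (at x) \<and>
        ((\<lambda>y. uxx t y) has_vector_derivative uxxx t x) (at x) \<and>
        ((\<lambda>y. uxxx t y) has_vector_derivative uxxxx t x) (at x) \<and>
        ((\<lambda>s. ux s x) has_vector_derivative utx t x) (at t within {0..T}) \<and>
        ((\<lambda>s. uxx s x) has_vector_derivative utxx t x) (at t within {0..T})) \<longrightarrow>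
     (\<forall>g\<in>{ut, ux, uxx, uxxx, uxxxx, utx, utxx}.
        continuous_on ({0..T} \<times> UNIV) (\<lambda>(t, x). g t x) \<and>
        \<comment> \<open>assumption (ii): L-infinity in time, L2 in space, norm below K\<close>
        (\<forall>t\<in>{0..T}. (\<integral>\<^sup>+ x. ennreal ((cmod (g t x))\<^sup>2) \<partial>lborel) < ennreal (K\<^sup>2))) \<longrightarrow>
     (\<forall>t\<in>{0..T}. \<forall>x. \<i> * ut t x = complex_of_real (nu / 2) * uxx t x + f t x (u t x)) \<longrightarrow>
     (\<forall>x. u T x = G x) \<longrightarrow>
     (\<forall>x. (G has_vector_derivative Gp x) (at x)) \<longrightarrow>
     \<comment> \<open>networks: measurable, finite second moments (implicit in the paper)\<close>
     (\<forall>j<M. \<forall>\<xi>\<in>params Na. (\<lambda>y. Unet j y \<xi>) \<in> borel_measurable borel \<and>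
        (\<forall>x. EXp nu dt x j (\<lambda>y. (cmod (Unet j y \<xi>))\<^sup>2) < \<infinity>)) \<longrightarrow>
     (\<forall>j<M. \<forall>\<eta>\<in>params Nb. (\<lambda>y. Znet j y \<eta>) \<in> borel_measurable borel \<and>
        (\<forall>x. EXp nu dt x j (\<lambda>y. (cmod (Znet j y \<eta>))\<^sup>2) < \<infinity>)) \<longrightarrow>
     \<comment> \<open>algorithm: (xi j x, eta j x) is a minimizer of L_j (at starting point x)\<close>
     (\<forall>j<M. \<forall>x. xi j x \<in> params Na \<and> eta j x \<in> params Nb \<and>
        (\<forall>\<xi>\<in>params Na. \<forall>\<eta>\<in>params Nb.
           loss nu dt f x j (Uh (Suc j) x) (Zh (Suc j) x)
                (\<lambda>y. Unet j y (xi j x)) (\<lambda>y. Znet j y (eta j x))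
         \<le> loss nu dt f x j (Uh (Suc j) x) (Zh (Suc j) x)
                (\<lambda>y. Unet j y \<xi>) (\<lambda>y. Znet j y \<eta>))) \<longrightarrow>
     \<comment> \<open>auxiliary system defining hat-v_j, hat-w_j\<close>
     (\<forall>j<M. \<forall>x y.
        Re (vhat j x y) = condE nu dt (\<lambda>z w. Re (Uh (Suc j) x z)) y
           - sqrt nu / 2 * condE nu dt (\<lambda>z w. (Re (Zh (Suc j) x z) + Im (Zh (Suc j) x z)) * w) y
           - Im (f (real j * dt) y (vhat j x y)) * dt \<and>
        Im (vhat j x y) = condE nu dt (\<lambda>z w. Im (Uh (Suc j) x z)) y
           + sqrt nu / 2 * condE nu dt (\<lambda>z w. (Re (Zh (Suc j) x z) - Im (Zh (Suc j) x z)) * w) y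
           + Re (f (real j * dt) y (vhat j x y)) * dt \<and>
        Re (what j x y) = 1 / (dt * sqrt nu)
             * condE nu dt (\<lambda>z w. (Re (Uh (Suc j) x z) + Im (Uh (Suc j) x z)) * w) y
           - 1 / dt * condE nu dt (\<lambda>z w. Im (Zh (Suc j) x z) * w\<^sup>2) y \<and>
        Im (what j x y) = 1 / (dt * sqrt nu)
             * condE nu dt (\<lambda>z w. (Im (Uh (Suc j) x z) - Re (Uh (Suc j) x z)) * w) y
           + 1 / dt * condE nu dt (\<lambda>z w. Re (Zh (Suc j) x z) * w\<^sup>2) y) \<longrightarrow>
     \<comment> \<open>the integrands defining the approximation errors are measurable in x\<close>
     (\<forall>j<M. (\<lambda>x. INF \<xi>\<in>params Na. EXp nu dt x j (\<lambda>y. (cmod (vhat j x y - Unet j y \<xi>))\<^sup>2))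
               \<in> borel_measurable lborel \<and>
            (\<lambda>x. INF \<eta>\<in>params Nb. EXp nu dt x j (\<lambda>y. (cmod (what j x y - Znet j y \<eta>))\<^sup>2))
               \<in> borel_measurable lborel) \<longrightarrow>
     \<comment> \<open>conclusion\<close>
     (\<forall>j<M.
        (\<integral>\<^sup>+ x. EXp nu dt x j (\<lambda>y. (cmod (vhat j x y - Unet j y (xi j x)))\<^sup>2) \<partial>lborel)
        + ennreal (nu * dt / 2)
          * (\<integral>\<^sup>+ x. EXp nu dt x j (\<lambda>y. (cmod (what j x y - Znet j y (eta j x)))\<^sup>2) \<partial>lborel)
        \<le> ennreal C *
          ((\<integral>\<^sup>+ x. (INF \<xi>\<in>params Na. EXp nu dt x j (\<lambda>y. (cmod (vhat j x y - Unet j y \<xi>))\<^sup>2)) \<partial>lborel)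
           + ennreal dt *
             (\<integral>\<^sup>+ x. (INF \<eta>\<in>params Nb. EXp nu dt x j (\<lambda>y. (cmod (what j x y - Znet j y \<eta>))\<^sup>2)) \<partial>lborel))))"
proof -
  have C: "0 < max 3 (nu / 2)" and \<delta>0: "0 < 1 / (4 * L)" using assms by simp_all
  show ?thesis
    unfolding Let_def
    by (rule exI[of _ "max 3 (nu / 2)"], rule conjI[OF C], rule exI[of _ "1 / (4 * L)"], rule conjI[OF \<delta>0],
        intro allI impI, (rule error_bound[OF assms refl]; assumption))
qed

end
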